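(* Let $T>0$, $H_T=(0,T)\times(0,\infty)$, $\tilde U\in C([0,T])$ with $\tilde U\le0$, and let $w\ge0$ be a classical solution of $$\partial_tw-w^2+\partial_y^{-1}(w+\tilde U)\,\partial_yw-2\tilde Uw+\int_{+\infty}^yw\,dy'-\partial_y^2w=0\ \text{ in }H_T,\qquad w|_{y=0}=-\tilde U(t),\quad\lim_{y\to+\infty}w=0,$$ with $\sup_{H_T}(|w|+|\partial_yw|)e^{y}<\infty$. Let $\rho$ be an admissible weight with constants $C_f,\beta$ and set $G(t)=\int_0^\infty\rho(y)w(t,y)dy$. Then for $t\in(0,T)$, $$\frac{dG}{dt}\ge\frac{2(1-\beta)}{\|\rho\|_{L^1(\mathbb R_+)}}G^2-\|\tilde U\|_{L^\infty([0,T])}(3+C_f)\,G.$$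
   Context: $\partial_y^{-1}f(t,y):=\int_0^yf(t,y')dy'$. Admissible weight: $\rho:[0,\infty)\to[0,\infty)$, $\rho\in W^{2,\infty}(\mathbb R_+)\cap C^1(\mathbb R_+)\cap L^1(\mathbb R_+)$, with $\rho=f$ on $[0,B]$ and $\rho=g$ on $(B,\infty)$, for numbers $0<A<M_0<B<\infty$, functions $f\in C^1([0,B])\cap C^2([0,B]\setminus\{A\})$, $g\in C^2([M_0,\infty))\cap L^1([M_0,\infty))$, a cut-off $\eta\in C^\infty(\mathbb R)$ with $\eta=0$ on $(-\infty,M_0)$, $\eta=1$ on $(B,\infty)$, $0\le\eta'\le\frac{2}{B-M_0}$, and constants $C_f>0$, $\beta\in(0,1)$, such that: (F1) $f(0)=0$, $f>0$ on $(0,B]$; (F2) $yf'(y)\le C_ff(y)$ on $[0,B]$; (F3) $\int_0^yf\,dy'+f''(y)\ge0$ on $[0,B]\setminus\{A\}$; (F4) $f''\le0$ on $[0,B]\setminus\{A\}$; (G1) $\lim_{y\to\infty}g=\lim_{y\to\infty}g'=0$, $g>0$ on $(M_0,\infty)$; (G2) $g'<0$, $g''>0$ on $(M_0,\infty)$; (G3) $\frac{(g')^2}{gg''}\le\beta$ on $[B,\infty)$; (FG1) $f(B)=g(B)$, $f'(B)=g'(B)$; (FG2) $\eta\frac{(g')^2}{fg''}\le\beta$ and $2\eta'g'+\eta g''-f''\ge0$ on $[M_0,B]$. *)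

theory Defs
  imports "HOL-Analysis.Analysis"
begin

definition smooth_real :: "(real \<Rightarrow> real) \<Rightarrow> bool" where
  "smooth_real h \<longleftrightarrow> (\<exists>D :: nat \<Rightarrow> real \<Rightarrow> real. D 0 = h \<and>
      (\<forall>n x. (D n has_real_derivative D (Suc n) x) (at x)))"

text \<open>Derivatives of f, g, eta
  and rho are carried explicitly (f1, f2 = f', f''; etc.).
  W^{2,infinity}(R_+) for a C^1 function is rendered as: rho and rho' bounded
  on [0,infinity) and rho' Lipschitz there.\<close>
definition admissible_weight :: "(real \<Rightarrow> real) \<Rightarrow> real \<Rightarrow> real \<Rightarrow> bool" where
  "admissible_weight \<rho> Cf \<beta> \<longleftrightarrow>
    (\<forall>y\<ge>0. \<rho> y \<ge> 0) \<and>
    \<comment> \<open>C^1(R_+)\<close>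
    (\<exists>\<rho>1. (\<forall>y\<ge>0. (\<rho> has_real_derivative \<rho>1 y) (at y within {0..})) \<and>
          continuous_on {0..} \<rho>1 \<and>
          \<comment> \<open>W^{2,infinity}(R_+)\<close>
          bounded (\<rho> ` {0..}) \<and> bounded (\<rho>1 ` {0..}) \<and>
          (\<exists>L. \<forall>x\<ge>0. \<forall>y\<ge>0. \<bar>\<rho>1 x - \<rho>1 y\<bar> \<le> L * \<bar>x - y\<bar>)) \<and>
    \<comment> \<open>L^1(R_+)\<close>
    \<rho> absolutely_integrable_on {0..} \<and>
    Cf > 0 \<and> 0 < \<beta> \<and> \<beta> < 1 \<and>
    (\<exists>A M0 B f f1 f2 g g1 g2 \<eta> \<eta>1.
       0 < A \<and> A < M0 \<and> M0 < B \<and>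
       (\<forall>y\<in>{0..B}. \<rho> y = f y) \<and> (\<forall>y>B. \<rho> y = g y) \<and>
       \<comment> \<open>f in C^1([0,B]) \<inter> C^2([0,B] - {A})\<close>
       (\<forall>y\<in>{0..B}. (f has_real_derivative f1 y) (at y within {0..B})) \<and>
       continuous_on {0..B} f1 \<and>
       (\<forall>y\<in>{0..B} - {A}. (f1 has_real_derivative f2 y) (at y within {0..B})) \<and>
       continuous_on ({0..B} - {A}) f2 \<and>
       \<comment> \<open>g in C^2([M0,infinity)) \<inter> L^1([M0,infinity))\<close>
       (\<forall>y\<ge>M0. (g has_real_derivative g1 y) (at y within {M0..})) \<and>
       (\<forall>y\<ge>M0. (g1 has_real_derivative g2 y) (at y within {M0..})) \<and>
       continuous_on {M0..} g2 \<and>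
       g absolutely_integrable_on {M0..} \<and>
       \<comment> \<open>cut-off eta\<close>
       smooth_real \<eta> \<and> (\<forall>x. (\<eta> has_real_derivative \<eta>1 x) (at x)) \<and>
       (\<forall>x<M0. \<eta> x = 0) \<and> (\<forall>x>B. \<eta> x = 1) \<and>
       (\<forall>x. 0 \<le> \<eta>1 x \<and> \<eta>1 x \<le> 2 / (B - M0)) \<and>
       \<comment> \<open>(F1)-(F4)\<close>
       f 0 = 0 \<and> (\<forall>y\<in>{0<..B}. f y > 0) \<and>
       (\<forall>y\<in>{0..B}. y * f1 y \<le> Cf * f y) \<and>
       (\<forall>y\<in>{0..B} - {A}. integral {0..y} f + f2 y \<ge> 0) \<and>
       (\<forall>y\<in>{0..B} - {A}. f2 y \<le> 0) \<and>
       \<comment> \<open>(G1)-(G3)\<close>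
       (g \<longlongrightarrow> 0) at_top \<and> (g1 \<longlongrightarrow> 0) at_top \<and> (\<forall>y>M0. g y > 0) \<and>
       (\<forall>y>M0. g1 y < 0 \<and> g2 y > 0) \<and>
       (\<forall>y\<ge>B. (g1 y)\<^sup>2 / (g y * g2 y) \<le> \<beta>) \<and>
       \<comment> \<open>(FG1)-(FG2)\<close>
       f B = g B \<and> f1 B = g1 B \<and>
       (\<forall>y\<in>{M0..B}. \<eta> y * (g1 y)\<^sup>2 / (f y * g2 y) \<le> \<beta> \<and>
                      2 * \<eta>1 y * g1 y + \<eta> y * g2 y - f2 y \<ge> 0))"

end

theory Submission
  imports Defs
begin

text \<open>The weighted mass \<open>G = \<integral> \<rho> w\<close> is differentiated through its truncations to
  \<open>[1/(n+1), n+1]\<close>. Since \<open>\<partial>\<^sub>t w\<close> is controlled only through the equation, \<open>\<integral> \<rho> \<partial>\<^sub>t w\<close>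
  is integrated by parts into a boundary term and a bulk term free of \<open>\<partial>\<^sub>y\<^sup>2 w\<close>; both decay
  exponentially in \<open>y\<close>, uniformly in \<open>t\<close>, so the truncated derivatives converge uniformly
  and \<open>G'\<close> is their limit.

  For the lower bound a second integration by parts leaves \<open>\<rho>''(w - W\<^sup>2/2)\<close> with
  \<open>W = \<partial>\<^sub>y\<^sup>-\<^sup>1 w\<close>. On \<open>(0, M0)\<close> this is harmless by (F3), (F4); beyond \<open>M0\<close> the cut-off term
  \<open>\<eta> g' W\<^sup>2\<close>, which vanishes at \<open>M0\<close> and is nonpositive at infinity, absorbs it by (FG2), (G3)
  at the cost of a fraction \<open>\<beta>\<close> of \<open>2\<rho>w\<^sup>2\<close>. Together with \<open>|U|(3\<rho> + y\<rho>') \<le> \<parallel>U\<parallel>\<^sub>\<infinity>(3 + C\<^sub>f)\<rho>\<close>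
  from (F2) and \<open>2\<rho>w\<^sup>2 \<ge> 2(1-\<beta>)(2\<mu>\<rho>w - \<mu>\<^sup>2\<rho>) + 2\<beta>\<rho>w\<^sup>2\<close> this gives
  \<open>G' \<ge> (4(1-\<beta>)\<mu> - \<parallel>U\<parallel>\<^sub>\<infinity>(3 + C\<^sub>f)) G - 2(1-\<beta>)\<mu>\<^sup>2 \<integral>\<rho>\<close> for every \<open>\<mu>\<close>, and
  \<open>\<mu> = G / \<integral>\<rho>\<close> yields the claim.\<close>

lemma integrable_on_atLeast_if_exp_bound:
  fixes f :: "real \<Rightarrow> real"
  assumes "continuous_on {a..} f" "\<And>x. x \<ge> a \<Longrightarrow> \<bar>f x\<bar> \<le> c * exp (-x)"
  shows "f integrable_on {a..}"
proof (rule measurable_bounded_by_integrable_imp_integrable)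
  show "f \<in> borel_measurable (lebesgue_on {a..})"
    using assms(1) by (simp add: continuous_imp_measurable_on_sets_lebesgue measurable_on_iff_borel_measurable)
  show "(\<lambda>x. c * exp (-x)) integrable_on {a..}"
    using integrable_cmul[OF integrable_on_exp_minus_to_infinity[of 1 a], of c] by simp
qed (use assms in auto)

lemma abs_mult_le_mult: "\<bar>a\<bar> \<le> (X::real) \<Longrightarrow> \<bar>b\<bar> \<le> Y \<Longrightarrow> \<bar>a * b\<bar> \<le> X * Y"
  by (simp add: abs_mult mult_mono')

lemma abs_add_le_add: "\<bar>a\<bar> \<le> (A::real) \<Longrightarrow> \<bar>b\<bar> \<le> B \<Longrightarrow> \<bar>a + b\<bar> \<le> A + B"
  using abs_triangle_ineq[of a b] by linarith

lemma abs_diff_le_add: "\<bar>a\<bar> \<le> (A::real) \<Longrightarrow> \<bar>b\<bar> \<le> B \<Longrightarrow> \<bar>a - b\<bar> \<le> A + B"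
  using abs_triangle_ineq4[of a b] by linarith

lemma abs_integral_le_integral:
  fixes f g :: "real \<Rightarrow> real"
  assumes "f integrable_on S" "g integrable_on S" "\<And>x. x \<in> S \<Longrightarrow> \<bar>f x\<bar> \<le> g x"
  shows "\<bar>integral S f\<bar> \<le> integral S g"
  using integral_norm_bound_integral[of f S g] assms by auto

lemma has_integral_exp_minus_interval:
  fixes a b :: real
  assumes "a \<le> b"
  shows "((\<lambda>x. exp (-x)) has_integral (exp (-a) - exp (-b))) {a..b}"
proof -
  have "((\<lambda>x. exp (-x)) has_integral ((-exp (-b)) - (-exp (-a)))) {a..b}"
    using assms by (intro fundamental_theorem_of_calculus)
         (auto intro!: derivative_eq_intros simp flip: has_real_derivative_iff_has_vector_derivative)
  then show ?thesis by simp
qed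

lemma has_integral_one_plus_x_exp_minus:
  fixes a b :: real
  assumes "a \<le> b"
  shows "((\<lambda>x. (1 + x) * exp (-x)) has_integral ((2 + a) * exp (-a) - (2 + b) * exp (-b))) {a..b}"
proof -
  have "((\<lambda>x. (1 + x) * exp (-x)) has_integral ((-(2 + b) * exp (-b)) - (-(2 + a) * exp (-a)))) {a..b}"
    using assms by (intro fundamental_theorem_of_calculus)
         (auto intro!: derivative_eq_intros simp: algebra_simps
               simp flip: has_real_derivative_iff_has_vector_derivative)
  then show ?thesis by (simp add: algebra_simps)
qed

lemma tendsto_affine_times_exp_minus: "((\<lambda>x::real. (c + x) * exp (-x)) \<longlongrightarrow> 0) at_top"
proof -
  have "((\<lambda>x::real. c * (x ^ 0 / exp x) + x ^ 1 / exp x) \<longlongrightarrow> c * 0 + 0) at_top"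
    by (intro tendsto_intros tendsto_power_div_exp_0)
  then show ?thesis by (simp add: exp_minus field_simps)
qed

lemma continuous_on_atLeast_0_upper_bound:
  fixes h :: "real \<Rightarrow> real"
  assumes "continuous_on {0..} h" "\<And>y. y > 0 \<Longrightarrow> h y \<le> c"
  shows "h 0 \<le> c"
proof -
  have "(h \<longlongrightarrow> h 0) (at 0 within {0..})"
    using assms(1) by (simp add: continuous_on_def)
  then have "(h \<longlongrightarrow> h 0) (at_right 0)"
    by (rule tendsto_within_subset) auto
  moreover have "\<forall>\<^sub>F y in at_right 0. h y \<le> c"
    using eventually_at_right_less[of "0::real"] by eventually_elim (use assms in auto)
  ultimately show ?thesis
    by (intro tendsto_upperbound[of h "h 0" "at_right 0"]) auto
qed

lemma has_real_derivative_at_if_within_open: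
  fixes F :: "real \<Rightarrow> real"
  assumes "(F has_real_derivative d) (at y within S)" "open T" "y \<in> T" "T \<subseteq> S"
  shows "(F has_real_derivative d) (at y)"
  using DERIV_subset[OF assms(1) assms(4)] at_within_open[OF assms(3,2)] by simp

lemma increasing_if_deriv_nonneg_off_point:
  fixes f :: "real \<Rightarrow> real"
  assumes "a \<le> c" "c \<le> b" "continuous_on {a..b} f"
    and "\<And>x. a < x \<Longrightarrow> x < b \<Longrightarrow> x \<noteq> c \<Longrightarrow> \<exists>d. (f has_real_derivative d) (at x) \<and> d \<ge> 0"
  shows "f a \<le> f b"
proof -
  have "f a \<le> f c"
    by (rule DERIV_nonneg_imp_increasing_open)
       (use assms in \<open>auto intro: continuous_on_subset[OF assms(3)]\<close>)
  also have "f c \<le> f b"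
    by (rule DERIV_nonneg_imp_increasing_open)
       (use assms in \<open>auto intro: continuous_on_subset[OF assms(3)]\<close>)
  finally show ?thesis .
qed

lemma has_real_derivative_uniform_limit:
  fixes F :: "nat \<Rightarrow> real \<Rightarrow> real"
  assumes S: "open S" "convex S" "t \<in> S"
    and F_deriv: "\<And>n s. s \<in> S \<Longrightarrow> (F n has_real_derivative F' n s) (at s)"
    and F'_lim: "uniform_limit S F' D sequentially"
    and F_lim: "\<And>s. s \<in> S \<Longrightarrow> (\<lambda>n. F n s) \<longlonglongrightarrow> G s"
  shows "(G has_real_derivative D t) (at t)"
proof -
  have "\<exists>g. \<forall>s\<in>S. (\<lambda>n. F n s) \<longlonglongrightarrow> g s \<and> (g has_derivative (\<lambda>h. D s * h)) (at s within S)"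
  proof (rule has_derivative_sequence[where f=F and f'="\<lambda>n s h. F' n s * h" and g'="\<lambda>s h. D s * h"])
    show "(F n has_derivative (\<lambda>h. F' n s * h)) (at s within S)" if "s \<in> S" for n s
      using F_deriv[OF that] unfolding has_field_derivative_def by (rule has_derivative_at_withinI)
    show "\<forall>\<^sub>F n in sequentially. \<forall>s\<in>S. \<forall>h. norm (F' n s * h - D s * h) \<le> e * norm h"
      if "e > 0" for e
    proof -
      have "\<forall>\<^sub>F n in sequentially. \<forall>s\<in>S. dist (F' n s) (D s) < e"
        using uniform_limitD[OF F'_lim that] .
      then show ?thesis
        by eventually_elim
           (auto simp: dist_real_def abs_mult left_diff_distrib[symmetric] intro!: mult_right_mono)
    qed
  qed (use S F_lim in auto)
  then obtain g where g: "\<And>s. s \<in> S \<Longrightarrow> (\<lambda>n. F n s) \<longlonglongrightarrow> g s"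
    "\<And>s. s \<in> S \<Longrightarrow> (g has_derivative (\<lambda>h. D s * h)) (at s within S)" by blast
  have "g s = G s" if "s \<in> S" for s
    using LIMSEQ_unique[OF g(1) F_lim] that by auto
  moreover have "(g has_derivative (\<lambda>h. D t * h)) (at t)"
    using g(2)[OF S(3)] at_within_open[OF S(3,1)] by simp
  ultimately have "(G has_derivative (\<lambda>h. D t * h)) (at t)"
    using has_derivative_transform_within_open[of g _ t UNIV S G] S by auto
  then show ?thesis
    by (simp add: has_field_derivative_def)
qed

lemma uniformly_Cauchy_onI_tail_bound:
  fixes F :: "nat \<Rightarrow> 'a \<Rightarrow> real"
  assumes "\<tau> \<longlonglongrightarrow> 0"
    and "\<And>m n x. x \<in> X \<Longrightarrow> n \<le> m \<Longrightarrow> \<bar>F m x - F n x\<bar> \<le> \<tau> n + \<tau> m"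
  shows "uniformly_Cauchy_on X F"
proof (rule uniformly_Cauchy_onI')
  fix e :: real assume "e > 0"
  then have "\<forall>\<^sub>F n in sequentially. \<tau> n < e / 2"
    using order_tendstoD(2)[OF assms(1), of "e / 2"] by simp
  then obtain M where M: "\<And>n. n \<ge> M \<Longrightarrow> \<tau> n < e / 2"
    unfolding eventually_sequentially by blast
  have "dist (F m x) (F n x) < e" if "x \<in> X" "m \<ge> M" "n > m" for x m n
    using assms(2)[of x m n] M[of m] M[of n] that by (simp add: dist_real_def abs_minus_commute)
  then show "\<exists>M. \<forall>x\<in>X. \<forall>m\<ge>M. \<forall>n>m. dist (F m x) (F n x) < e" by blast
qed

lemma continuous_on_slice:
  assumes "continuous_on (S \<times> Y) (\<lambda>p. F (fst p) (snd p))" "s \<in> S"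
  shows "continuous_on Y (F s)"
proof -
  have "continuous_on Y ((\<lambda>p. F (fst p) (snd p)) \<circ> (\<lambda>y. (s, y)))"
    by (rule continuous_on_compose[OF continuous_on_Pair[OF continuous_on_const continuous_on_id]])
       (rule continuous_on_subset[OF assms(1)], use assms(2) in auto)
  then show ?thesis by (simp add: o_def)
qed

lemma abs_le_SUP_abs:
  fixes U :: "real \<Rightarrow> real"
  assumes "continuous_on {a..b} U" "t \<in> {a..b}"
  shows "\<bar>U t\<bar> \<le> (SUP s\<in>{a..b}. \<bar>U s\<bar>)"
proof (rule cSUP_upper[OF assms(2)])
  have "compact ((\<lambda>s. \<bar>U s\<bar>) ` {a..b})"
    using assms(1) by (intro compact_continuous_image continuous_intros) auto
  then show "bdd_above ((\<lambda>s. \<bar>U s\<bar>) ` {a..b})"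
    by (intro bounded_imp_bdd_above compact_imp_bounded)
qed

definition trunc_lo :: "nat \<Rightarrow> real" where "trunc_lo n = inverse (real (Suc n))"
definition trunc_hi :: "nat \<Rightarrow> real" where "trunc_hi n = real (Suc n)"

lemma trunc_lo_hi:
  "0 < trunc_lo n" "trunc_lo n \<le> 1" "1 \<le> trunc_hi n"
  "m \<ge> n \<Longrightarrow> trunc_lo m \<le> trunc_lo n" "m \<ge> n \<Longrightarrow> trunc_hi n \<le> trunc_hi m"
  by (auto simp: trunc_lo_def trunc_hi_def field_simps)

lemma trunc_lo_tendsto: "trunc_lo \<longlonglongrightarrow> 0"
  using LIMSEQ_inverse_real_of_nat by (simp add: trunc_lo_def[abs_def])

lemma trunc_hi_tendsto: "filterlim trunc_hi at_top sequentially"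
  unfolding trunc_hi_def[abs_def]
  by (rule filterlim_compose[OF filterlim_real_sequentially filterlim_Suc])

lemma tendsto_trunc_hi_exp_minus: "(\<lambda>n. (c + trunc_hi n) * exp (- trunc_hi n)) \<longlonglongrightarrow> 0"
  by (rule filterlim_compose[OF tendsto_affine_times_exp_minus trunc_hi_tendsto])

lemma eventually_trunc_inside:
  assumes "0 < a"
  shows "\<forall>\<^sub>F n in sequentially. trunc_lo n < a \<and> b < trunc_hi n"
  using order_tendstoD(2)[OF trunc_lo_tendsto assms]
    filterlim_at_top_dense[THEN iffD1, OF trunc_hi_tendsto, rule_format, of b]
  by (auto intro: eventually_conj)

lemma tendsto_integral_trunc:
  fixes q h :: "real \<Rightarrow> real"
  assumes q_cont: "continuous_on {0..} q" and h: "h integrable_on {0..}"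
    and q_le: "\<And>y. y \<ge> 0 \<Longrightarrow> \<bar>q y\<bar> \<le> h y" and q_0: "q 0 = 0"
  shows "(\<lambda>n. integral {trunc_lo n..trunc_hi n} q) \<longlonglongrightarrow> integral {0..} q"
proof -
  define F where "F n = (\<lambda>y. if y \<in> {trunc_lo n..trunc_hi n} then q y else 0)" for n
  have sub: "{0..} \<inter> {trunc_lo n..trunc_hi n} = {trunc_lo n..trunc_hi n}" for n
    using trunc_lo_hi(1)[of n] by auto
  have F_int: "F n integrable_on {0..}" for n
    unfolding F_def integrable_restrict_Int[where S="{trunc_lo n..trunc_hi n}" and T="{0..}",
        simplified Int_commute] sub
    by (rule integrable_continuous_interval, rule continuous_on_subset[OF q_cont])
       (use trunc_lo_hi(1)[of n] in auto)
  have "(\<lambda>n. integral {0..} (F n)) \<longlonglongrightarrow> integral {0..} q"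
  proof (rule Equivalence_Lebesgue_Henstock_Integration.dominated_convergence(2)[OF F_int h])
    show "norm (F n y) \<le> h y" if "y \<in> {0..}" for n y
      using q_le[of y] that order_trans[OF abs_ge_zero q_le[of y]] by (auto simp: F_def)
    show "(\<lambda>n. F n y) \<longlonglongrightarrow> q y" if "y \<in> {0..}" for y
    proof (cases "y = 0")
      case True
      then have "F n y = 0" for n using q_0 by (simp add: F_def)
      then show ?thesis using True q_0 by simp
    next
      case False
      then have "0 < y" using that by auto
      have "\<forall>\<^sub>F n in sequentially. F n y = q y"
        using eventually_trunc_inside[OF \<open>0 < y\<close>, of y] by eventually_elim (auto simp: F_def)
      then show ?thesis by (rule tendsto_eventually)
    qed
  qed
  moreover have "integral {0..} (F n) = integral {trunc_lo n..trunc_hi n} q" for n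
    unfolding F_def integral_restrict_Int using trunc_lo_hi(1)[of n]
    by (simp add: max_absorb2 less_imp_le)
  ultimately show ?thesis by simp
qed

lemma transport_term_lower_bound:
  fixes r w u K y r1 Cf :: real
  assumes "r \<ge> 0" "w \<ge> 0" "u \<le> 0" "\<bar>u\<bar> \<le> K" "y * r1 \<le> Cf * r" "Cf \<ge> 0"
  shows "u * (3 * r + y * r1) * w + K * (3 + Cf) * r * w \<ge> 0"
proof (cases "3 * r + y * r1 \<ge> 0")
  case True
  have "(-u) * ((3 * r + y * r1) * w) \<le> K * ((3 * r + y * r1) * w)"
    using True assms by (intro mult_right_mono) auto
  also have "\<dots> \<le> K * ((3 + Cf) * r * w)"
    using assms order_trans[OF abs_ge_zero assms(4)]
    by (intro mult_left_mono mult_right_mono) (auto simp: algebra_simps)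
  finally show ?thesis by (simp add: algebra_simps)
next
  case False
  then have "u * (3 * r + y * r1) * w \<ge> 0"
    using assms by (simp add: mult_nonpos_nonpos)
  moreover have "K * (3 + Cf) * r * w \<ge> 0"
    using assms order_trans[OF abs_ge_zero assms(4)] by simp
  ultimately show ?thesis by linarith
qed

lemma quadratic_term_lower_bound:
  fixes r w \<beta> \<mu> :: real
  assumes "r \<ge> 0" "\<beta> < 1"
  shows "2 * r * w\<^sup>2 - 2 * (1 - \<beta>) * (2 * \<mu> * r * w - \<mu>\<^sup>2 * r) \<ge> 2 * \<beta> * r * w\<^sup>2"
proof -
  have "2 * r * w\<^sup>2 - 2 * (1 - \<beta>) * (2 * \<mu> * r * w - \<mu>\<^sup>2 * r) - 2 * \<beta> * r * w\<^sup>2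
      = 2 * (1 - \<beta>) * (r * (w - \<mu>)\<^sup>2)"
    by (simp add: algebra_simps power2_eq_square)
  moreover have "2 * (1 - \<beta>) * (r * (w - \<mu>)\<^sup>2) \<ge> 0"
    using assms by simp
  ultimately show ?thesis by linarith
qed

lemma cutoff_term_lower_bound:
  fixes r w W \<beta> e g1 g2 :: real
  assumes "g2 > 0" "e \<ge> 0" "e * g1\<^sup>2 \<le> \<beta> * r * g2"
  shows "2 * \<beta> * r * w\<^sup>2 + e * g2 * W\<^sup>2 / 2 + 2 * e * g1 * W * w \<ge> 0"
proof -
  have "2 * g2 * (2 * \<beta> * r * w\<^sup>2 + e * g2 * W\<^sup>2 / 2 + 2 * e * g1 * W * w)
      = 4 * (\<beta> * r * g2 - e * g1\<^sup>2) * w\<^sup>2 + e * (g2 * W + 2 * g1 * w)\<^sup>2"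
    by (simp add: algebra_simps power2_eq_square)
  also have "\<dots> \<ge> 0"
    using assms by (intro add_nonneg_nonneg mult_nonneg_nonneg) auto
  finally show ?thesis
    using assms(1) by (simp add: zero_le_mult_iff)
qed

lemma excess_rate_nonneg_inner:
  fixes r w W u K y r1 r2 Cf p \<beta> \<mu> :: real
  assumes "r \<ge> 0" "w \<ge> 0" "u \<le> 0" "\<bar>u\<bar> \<le> K" "y * r1 \<le> Cf * r" "Cf \<ge> 0" "\<beta> > 0" "\<beta> < 1"
    "r2 \<le> 0" "p + r2 \<ge> 0"
  shows "2 * r * w\<^sup>2 + u * (3 * r + y * r1) * w + p * w + r2 * w - r2 * W\<^sup>2 / 2
     - (2 * (1 - \<beta>) * (2 * \<mu> * r * w - \<mu>\<^sup>2 * r) - K * (3 + Cf) * r * w) \<ge> 0"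
proof -
  have "(p + r2) * w \<ge> 0" "- r2 * W\<^sup>2 / 2 \<ge> 0" "2 * \<beta> * r * w\<^sup>2 \<ge> 0"
    using assms by (simp_all add: mult_nonpos_nonneg)
  then show ?thesis
    using transport_term_lower_bound[OF assms(1-6)] quadratic_term_lower_bound[OF assms(1,8), of w \<mu>]
    by (simp add: algebra_simps)
qed

lemma excess_rate_nonneg_outer:
  fixes r w W u K y r1 r2 Cf p \<beta> \<mu> e e1 g1 g2 :: real
  assumes "r \<ge> 0" "w \<ge> 0" "u \<le> 0" "\<bar>u\<bar> \<le> K" "y * r1 \<le> Cf * r" "Cf \<ge> 0" "\<beta> > 0" "\<beta> < 1"
    "r2 \<le> 2 * e1 * g1 + e * g2" "p + r2 \<ge> 0" "g2 > 0" "e \<ge> 0" "e * g1\<^sup>2 \<le> \<beta> * r * g2"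
  shows "2 * r * w\<^sup>2 + u * (3 * r + y * r1) * w + p * w + r2 * w - r2 * W\<^sup>2 / 2
     - (2 * (1 - \<beta>) * (2 * \<mu> * r * w - \<mu>\<^sup>2 * r) - K * (3 + Cf) * r * w)
     + (e1 * g1 * W\<^sup>2 + e * g2 * W\<^sup>2 + 2 * e * g1 * W * w) \<ge> 0"
proof -
  have "(p + r2) * w \<ge> 0" using assms by simp
  moreover have "r2 * W\<^sup>2 \<le> (2 * e1 * g1 + e * g2) * W\<^sup>2"
    using assms by (intro mult_right_mono) auto
  ultimately show ?thesis
    using transport_term_lower_bound[OF assms(1-6)] quadratic_term_lower_bound[OF assms(1,8), of w \<mu>]
      cutoff_term_lower_bound[OF assms(11-13), of w W]
    by (simp add: algebra_simps)
qed

section \<open>Admissible weights\<close>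

locale admissible_weight_facts =
  fixes \<rho> \<rho>1 :: "real \<Rightarrow> real" and Cf \<beta> Rb R1 A M0 B :: real
    and f f1 f2 g g1 g2 \<eta> \<eta>1 :: "real \<Rightarrow> real"
  assumes rho_nonneg: "\<And>y. y \<ge> 0 \<Longrightarrow> \<rho> y \<ge> 0"
    and rho_deriv: "\<And>y. y \<ge> 0 \<Longrightarrow> (\<rho> has_real_derivative \<rho>1 y) (at y within {0..})"
    and rho1_cont: "continuous_on {0..} \<rho>1"
    and rho_bounded: "\<And>y. y \<ge> 0 \<Longrightarrow> \<bar>\<rho> y\<bar> \<le> Rb"
    and rho1_bounded: "\<And>y. y \<ge> 0 \<Longrightarrow> \<bar>\<rho>1 y\<bar> \<le> R1"
    and rho_integrable: "\<rho> absolutely_integrable_on {0..}"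
    and Cf_pos: "Cf > 0" and beta_pos: "0 < \<beta>" and beta_less_1: "\<beta> < 1"
    and A_pos: "0 < A" and A_less_M0: "A < M0" and M0_less_B: "M0 < B"
    and rho_eq_f: "\<And>y. y \<in> {0..B} \<Longrightarrow> \<rho> y = f y"
    and rho_eq_g: "\<And>y. y > B \<Longrightarrow> \<rho> y = g y"
    and f_deriv: "\<And>y. y \<in> {0..B} \<Longrightarrow> (f has_real_derivative f1 y) (at y within {0..B})"
    and f1_deriv: "\<And>y. y \<in> {0..B} - {A} \<Longrightarrow> (f1 has_real_derivative f2 y) (at y within {0..B})"
    and g_deriv: "\<And>y. y \<ge> M0 \<Longrightarrow> (g has_real_derivative g1 y) (at y within {M0..})"
    and g1_deriv: "\<And>y. y \<ge> M0 \<Longrightarrow> (g1 has_real_derivative g2 y) (at y within {M0..})"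
    and eta_deriv: "\<And>x. (\<eta> has_real_derivative \<eta>1 x) (at x)"
    and eta_below: "\<And>x. x < M0 \<Longrightarrow> \<eta> x = 0" and eta_above: "\<And>x. x > B \<Longrightarrow> \<eta> x = 1"
    and eta1_nonneg: "\<And>x. 0 \<le> \<eta>1 x"
    and f_0: "f 0 = 0" and f_pos: "\<And>y. y \<in> {0<..B} \<Longrightarrow> f y > 0"
    and F2: "\<And>y. y \<in> {0..B} \<Longrightarrow> y * f1 y \<le> Cf * f y"
    and F3: "\<And>y. y \<in> {0..B} - {A} \<Longrightarrow> integral {0..y} f + f2 y \<ge> 0"
    and F4: "\<And>y. y \<in> {0..B} - {A} \<Longrightarrow> f2 y \<le> 0"
    and g1_tendsto: "(g1 \<longlongrightarrow> 0) at_top" and g_pos: "\<And>y. y > M0 \<Longrightarrow> g y > 0"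
    and g1_neg: "\<And>y. y > M0 \<Longrightarrow> g1 y < 0" and g2_pos: "\<And>y. y > M0 \<Longrightarrow> g2 y > 0"
    and G3: "\<And>y. y \<ge> B \<Longrightarrow> (g1 y)\<^sup>2 / (g y * g2 y) \<le> \<beta>"
    and FG2_ratio: "\<And>y. y \<in> {M0..B} \<Longrightarrow> \<eta> y * (g1 y)\<^sup>2 / (f y * g2 y) \<le> \<beta>"
    and FG2_convex: "\<And>y. y \<in> {M0..B} \<Longrightarrow> 2 * \<eta>1 y * g1 y + \<eta> y * g2 y - f2 y \<ge> 0"

lemma admissible_weight_facts_obtain:
  assumes "admissible_weight \<rho> Cf \<beta>"
  obtains \<rho>1 Rb R1 A M0 B f f1 f2 g g1 g2 \<eta> \<eta>1
  where "admissible_weight_facts \<rho> \<rho>1 Cf \<beta> Rb R1 A M0 B f f1 f2 g g1 g2 \<eta> \<eta>1"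
  using assms unfolding admissible_weight_def bounded_iff real_norm_def
  apply (elim conjE exE)
  subgoal premises prems for \<rho>1 A Rb R1 L M0 B f f1 f2 g g1 g2 \<eta> \<eta>1
    by (rule that[of \<rho>1 Rb R1 A M0 B f f1 f2 g g1 g2 \<eta> \<eta>1], unfold_locales) (simp_all add: prems, (use prems in fastforce)+)
  done

context admissible_weight_facts
begin

definition "P y = integral {0..y} \<rho>"

lemma rho_continuous: "continuous_on {0..} \<rho>"
  unfolding continuous_on_eq_continuous_within
  using rho_deriv DERIV_continuous by blast

lemma rho_has_derivative: "y > 0 \<Longrightarrow> (\<rho> has_real_derivative \<rho>1 y) (at y)"
  by (rule has_real_derivative_at_if_within_open[where T="{0<..}" and S="{0..}"]) (use rho_deriv in auto)

lemma rho_0: "\<rho> 0 = 0"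
  using rho_eq_f f_0 M0_less_B A_less_M0 A_pos by auto

lemma rho1_0_nonneg: "\<rho>1 0 \<ge> 0"
proof -
  have "((\<lambda>y. (\<rho> y - \<rho> 0) / (y - 0)) \<longlongrightarrow> \<rho>1 0) (at 0 within {0..})"
    using rho_deriv[of 0] by (simp add: has_field_derivative_iff)
  then have "((\<lambda>y. (\<rho> y - \<rho> 0) / (y - 0)) \<longlongrightarrow> \<rho>1 0) (at_right 0)"
    by (rule tendsto_within_subset) auto
  moreover have "\<forall>\<^sub>F y in at_right 0. 0 \<le> (\<rho> y - \<rho> 0) / (y - 0)"
    using eventually_at_right_less[of "0::real"] by eventually_elim (use rho_0 rho_nonneg in auto)
  ultimately show ?thesis by (intro tendsto_lowerbound) auto
qed

lemma P_has_derivative: "y > 0 \<Longrightarrow> (P has_real_derivative \<rho> y) (at y)"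
proof -
  assume y: "y > 0"
  have "(P has_real_derivative \<rho> y) (at y within {0..y+1})"
    unfolding P_def[abs_def]
    by (rule integral_has_real_derivative) (use continuous_on_subset[OF rho_continuous] y in auto)
  then show ?thesis
    by (rule has_real_derivative_at_if_within_open[where T="{0<..<y+1}"]) (use y in auto)
qed

lemma P_bounds: assumes "y \<ge> 0" shows "\<bar>P y\<bar> \<le> Rb * y" "P y \<ge> 0"
proof -
  have "\<bar>P y\<bar> \<le> integral {0..y} (\<lambda>x. Rb)"
    unfolding P_def
    by (rule abs_integral_le_integral)
       (use continuous_on_subset[OF rho_continuous] rho_bounded in \<open>auto intro!: integrable_continuous_interval\<close>)
  then show "\<bar>P y\<bar> \<le> Rb * y" using assms by (simp add: mult.commute)
  show "P y \<ge> 0" unfolding P_def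
    by (rule integral_nonneg)
       (use continuous_on_subset[OF rho_continuous] rho_nonneg in \<open>auto intro!: integrable_continuous_interval\<close>)
qed

lemma rho1_eq_f1:
  assumes y: "0 < y" "y < B" shows "\<rho>1 y = f1 y"
proof -
  have "(f has_real_derivative f1 y) (at y)"
    by (rule has_real_derivative_at_if_within_open[where S="{0..B}" and T="{0<..<B}"]) (use f_deriv y in auto)
  moreover have "(f has_real_derivative \<rho>1 y) (at y)"
    by (rule has_field_derivative_transform_within_open[OF rho_has_derivative[OF y(1)], where S="{0<..<B}"])
       (use rho_eq_f y in auto)
  ultimately show ?thesis using DERIV_unique by blast
qed

lemma rho1_has_derivative_f2:
  assumes y: "0 < y" "y < B" "y \<noteq> A" shows "(\<rho>1 has_real_derivative f2 y) (at y)"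
proof -
  have "(f1 has_real_derivative f2 y) (at y)"
    by (rule has_real_derivative_at_if_within_open[where S="{0..B}" and T="{0<..<B}"]) (use f1_deriv y in auto)
  then show ?thesis
    by (rule has_field_derivative_transform_within_open[where S="{0<..<B}"]) (use y rho1_eq_f1 in auto)
qed

lemma g_has_derivative: "y > M0 \<Longrightarrow> (g has_real_derivative g1 y) (at y)"
  by (rule has_real_derivative_at_if_within_open[where S="{M0..}" and T="{M0<..}"]) (use g_deriv in auto)

lemma g1_has_derivative: "y > M0 \<Longrightarrow> (g1 has_real_derivative g2 y) (at y)"
  by (rule has_real_derivative_at_if_within_open[where S="{M0..}" and T="{M0<..}"]) (use g1_deriv in auto)

lemma g1_continuous: "continuous_on {M0..} g1"
  unfolding continuous_on_eq_continuous_within using g1_deriv DERIV_continuous by blast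

lemma rho1_eq_g1: assumes "y > B" shows "\<rho>1 y = g1 y"
proof -
  have "(g has_real_derivative \<rho>1 y) (at y)"
    by (rule has_field_derivative_transform_within_open[OF rho_has_derivative, where S="{B<..}"])
       (use rho_eq_g assms A_pos A_less_M0 M0_less_B in auto)
  then show ?thesis
    using DERIV_unique g_has_derivative[of y] assms M0_less_B by force
qed

lemma rho1_has_derivative_g2: assumes "y > B" shows "(\<rho>1 has_real_derivative g2 y) (at y)"
  by (rule has_field_derivative_transform_within_open[OF g1_has_derivative, where S="{B<..}"])
     (use rho1_eq_g1 assms M0_less_B in auto)

lemma eta_M0: "\<eta> M0 = 0"
proof -
  have "(\<eta> \<longlongrightarrow> \<eta> M0) (at_left M0)"
    using DERIV_isCont[OF eta_deriv] by (simp add: isCont_def filterlim_at_split)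
  moreover have "(\<eta> \<longlongrightarrow> 0) (at_left M0)"
    by (rule tendsto_eventually) (use eventually_at_left_real[of "M0 - 1" M0] in \<open>auto elim: eventually_mono simp: eta_below\<close>)
  ultimately show ?thesis
    using tendsto_unique[of "at_left M0"] by (metis trivial_limit_at_left_real)
qed

lemma eta_nonneg: "\<eta> y \<ge> 0"
proof (cases "y < M0")
  case False
  have "\<eta> (M0 - 1) \<le> \<eta> y"
    by (rule DERIV_nonneg_imp_nondecreasing[of "M0 - 1" y]) (use False eta_deriv eta1_nonneg in auto)
  then show ?thesis using eta_below by auto
qed (use eta_below in auto)

lemma eta1_above: assumes "y > B" shows "\<eta>1 y = 0"
proof -
  have "((\<lambda>x. 1) has_real_derivative \<eta>1 y) (at y)"
    by (rule has_field_derivative_transform_within_open[OF eta_deriv, where S="{B<..}"])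
       (use eta_above assms in auto)
  then show ?thesis using DERIV_unique[OF _ DERIV_const] by blast
qed

lemma inner_region:
  assumes x: "0 < x" "x < M0" "x \<noteq> A"
  shows "(\<rho>1 has_real_derivative f2 x) (at x)" "x * \<rho>1 x \<le> Cf * \<rho> x"
    "f2 x \<le> 0" "P x + f2 x \<ge> 0"
proof -
  have xB: "x \<in> {0..B} - {A}" "x < B" using x M0_less_B by auto
  show "(\<rho>1 has_real_derivative f2 x) (at x)" using rho1_has_derivative_f2 x xB by blast
  show "x * \<rho>1 x \<le> Cf * \<rho> x" using F2 rho_eq_f rho1_eq_f1 x xB by auto
  show "f2 x \<le> 0" using F4 xB by blast
  have "P x = integral {0..x} f" unfolding P_def by (rule integral_cong) (use rho_eq_f xB in auto)
  then show "P x + f2 x \<ge> 0" using F3 xB by auto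
qed

lemma outer_region:
  assumes x: "M0 < x" "x \<noteq> B"
  obtains r2 where "(\<rho>1 has_real_derivative r2) (at x)" "x * \<rho>1 x \<le> Cf * \<rho> x"
    "r2 \<le> 2 * \<eta>1 x * g1 x + \<eta> x * g2 x" "P x + r2 \<ge> 0" "\<eta> x * (g1 x)\<^sup>2 \<le> \<beta> * \<rho> x * g2 x"
proof (cases "x < B")
  case True
  have x0: "0 < x" "x \<noteq> A" using x A_pos A_less_M0 by auto
  have fpos: "f x > 0" and g2: "g2 x > 0" using f_pos g2_pos x x0 True by auto
  have rho: "\<rho> x = f x" using rho_eq_f x0 True by auto
  have "\<eta> x * (g1 x)\<^sup>2 \<le> \<beta> * \<rho> x * g2 x"
    using FG2_ratio[of x] x True fpos g2 rho by (simp add: divide_le_eq mult.commute mult.left_commute)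
  moreover have "f2 x \<le> 2 * \<eta>1 x * g1 x + \<eta> x * g2 x" using FG2_convex[of x] x True by simp
  moreover have "x * \<rho>1 x \<le> Cf * \<rho> x" using F2[of x] rho rho1_eq_f1 x0 True by auto
  moreover have "P x + f2 x \<ge> 0"
  proof -
    have "P x = integral {0..x} f" unfolding P_def by (rule integral_cong) (use rho_eq_f True in auto)
    then show ?thesis using F3[of x] x0 True by auto
  qed
  ultimately show ?thesis
    using that[OF rho1_has_derivative_f2[OF x0(1) True x0(2)]] by blast
next
  case False
  then have xB: "x > B" using x by auto
  have g: "g x > 0" "g1 x < 0" "g2 x > 0" using g_pos g1_neg g2_pos x by auto
  have et: "\<eta> x = 1" "\<eta>1 x = 0" using eta_above eta1_above xB by auto
  have "\<eta> x * (g1 x)\<^sup>2 \<le> \<beta> * \<rho> x * g2 x"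
    using G3[of x] g xB et rho_eq_g by (simp add: divide_le_eq mult.commute mult.left_commute)
  moreover have "x * \<rho>1 x \<le> Cf * \<rho> x"
  proof -
    have "x * \<rho>1 x \<le> 0" using rho1_eq_g1 xB g M0_less_B A_less_M0 A_pos
      by (simp add: mult_nonneg_nonpos)
    moreover have "Cf * \<rho> x \<ge> 0" using Cf_pos rho_nonneg[of x] xB M0_less_B A_less_M0 A_pos by simp
    ultimately show ?thesis by linarith
  qed
  moreover have "P x + g2 x \<ge> 0" using P_bounds[of x] g xB M0_less_B A_less_M0 A_pos by simp
  moreover have "g2 x \<le> 2 * \<eta>1 x * g1 x + \<eta> x * g2 x" using et by simp
  ultimately show ?thesis
    using that[OF rho1_has_derivative_g2[OF xB]] by blast
qed

end

section \<open>Integration by parts in \<open>y\<close>\<close>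

locale weighted_solution = admissible_weight_facts +
  fixes T K C :: real and U :: "real \<Rightarrow> real" and w wt wy wyy :: "real \<Rightarrow> real \<Rightarrow> real"
  assumes T_pos: "T > 0"
    and U_nonpos: "\<And>t. t \<in> {0..T} \<Longrightarrow> U t \<le> 0"
    and U_bounded: "\<And>t. t \<in> {0..T} \<Longrightarrow> \<bar>U t\<bar> \<le> K"
    and w_cont: "continuous_on ({0<..<T} \<times> {0..}) (\<lambda>p. w (fst p) (snd p))"
    and wt_deriv: "\<And>t y. t \<in> {0<..<T} \<Longrightarrow> y > 0 \<Longrightarrow> ((\<lambda>s. w s y) has_real_derivative wt t y) (at t)"
    and wy_deriv: "\<And>t y. t \<in> {0<..<T} \<Longrightarrow> y > 0 \<Longrightarrow> (w t has_real_derivative wy t y) (at y)"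
    and wyy_deriv: "\<And>t y. t \<in> {0<..<T} \<Longrightarrow> y > 0 \<Longrightarrow> (wy t has_real_derivative wyy t y) (at y)"
    and wt_cont: "continuous_on ({0<..<T} \<times> {0<..}) (\<lambda>p. wt (fst p) (snd p))"
    and w_nonneg: "\<And>t y. t \<in> {0<..<T} \<Longrightarrow> y \<ge> 0 \<Longrightarrow> w t y \<ge> 0"
    and equation: "\<And>t y. t \<in> {0<..<T} \<Longrightarrow> y > 0 \<Longrightarrow>
               wt t y - (w t y)\<^sup>2 + (integral {0..y} (w t) + U t * y) * wy t y - 2 * U t * w t y
               - integral {y..} (w t) - wyy t y = 0"
    and decay: "\<And>t y. t \<in> {0<..<T} \<Longrightarrow> y > 0 \<Longrightarrow> (\<bar>w t y\<bar> + \<bar>wy t y\<bar>) * exp y \<le> C"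
begin

lemma constants_nonneg: "C \<ge> 0" "K \<ge> 0" "Rb \<ge> 0" "R1 \<ge> 0"
proof -
  have "0 \<le> (\<bar>w (T/2) 1\<bar> + \<bar>wy (T/2) 1\<bar>) * exp 1" by simp
  also have "\<dots> \<le> C" using decay[of "T/2" 1] T_pos by simp
  finally show "C \<ge> 0" .
  show "K \<ge> 0" using order_trans[OF abs_ge_zero U_bounded[of 0]] T_pos by simp
  show "Rb \<ge> 0" using order_trans[OF abs_ge_zero rho_bounded[of 0]] by simp
  show "R1 \<ge> 0" using order_trans[OF abs_ge_zero rho1_bounded[of 0]] by simp
qed

lemma w_continuous: "s \<in> {0<..<T} \<Longrightarrow> continuous_on {0..} (w s)"
  by (rule continuous_on_slice[OF w_cont])

lemma wt_continuous: "s \<in> {0<..<T} \<Longrightarrow> continuous_on {0<..} (wt s)"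
  by (rule continuous_on_slice[OF wt_cont])

lemma w_continuous_interval: "s \<in> {0<..<T} \<Longrightarrow> a \<ge> 0 \<Longrightarrow> continuous_on {a..b} (w s)"
  by (rule continuous_on_subset[OF w_continuous]) auto

lemma wy_decay: assumes "s \<in> {0<..<T}" "y > 0" shows "\<bar>wy s y\<bar> \<le> C * exp (-y)"
proof -
  have "\<bar>wy s y\<bar> * exp y \<le> C"
    using decay[OF assms] by (smt (verit) exp_gt_zero mult_right_mono abs_ge_zero distrib_right)
  then show ?thesis by (simp add: exp_minus field_simps)
qed

lemma w_decay: assumes s: "s \<in> {0<..<T}" and y: "y \<ge> 0" shows "\<bar>w s y\<bar> \<le> C * exp (-y)"
proof -
  have pos: "\<bar>w s y\<bar> \<le> C * exp (-y)" if "y > 0" for y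
  proof -
    have "\<bar>w s y\<bar> * exp y \<le> C"
      using decay[OF s that] by (smt (verit) exp_gt_zero mult_right_mono abs_ge_zero distrib_right)
    then show ?thesis by (simp add: exp_minus field_simps)
  qed
  \<comment> \<open>at y = 0 the decay hypothesis is not available and continuity has to be used\<close>
  have "\<bar>w s 0\<bar> \<le> C"
  proof (rule continuous_on_atLeast_0_upper_bound[of "\<lambda>y. \<bar>w s y\<bar>"])
    show "continuous_on {0..} (\<lambda>y. \<bar>w s y\<bar>)" using w_continuous[OF s] by (intro continuous_intros)
    show "\<bar>w s y\<bar> \<le> C" if "y > 0" for y
      using pos[OF that] constants_nonneg(1) that by (smt (verit) exp_le_one_iff mult_left_le neg_le_0_iff_le)
  qed
  then show ?thesis using pos y by (cases "y = 0") auto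
qed

lemma w_integrable: assumes "s \<in> {0<..<T}" "a \<ge> 0" shows "w s integrable_on {a..}"
  by (rule integrable_on_atLeast_if_exp_bound[where c=C])
     (use continuous_on_subset[OF w_continuous[OF assms(1)]] w_decay[OF assms(1)] assms(2) in auto)

definition "W s y = integral {0..y} (w s)"
definition "V s y = integral {y..} (w s)"

lemma W_bound: assumes s: "s \<in> {0<..<T}" and y: "y \<ge> 0" shows "\<bar>W s y\<bar> \<le> C"
proof -
  have "\<bar>W s y\<bar> \<le> integral {0..y} (\<lambda>x. C * exp (-x))"
    unfolding W_def
    by (rule abs_integral_le_integral)
       (use integrable_continuous_interval[OF w_continuous_interval[OF s, of 0 y]] w_decay[OF s] in
        \<open>auto intro!: integrable_continuous_interval continuous_intros\<close>)
  also have "\<dots> = C * (1 - exp (-y))"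
    using integral_unique[OF has_integral_mult_right[OF has_integral_exp_minus_interval[OF y], of C]] by simp
  also have "\<dots> \<le> C" using constants_nonneg(1) by (simp add: mult_left_le)
  finally show ?thesis .
qed

lemma W_bound_linear: assumes s: "s \<in> {0<..<T}" and y: "y \<ge> 0" shows "\<bar>W s y\<bar> \<le> C * y"
proof -
  have "\<bar>W s y\<bar> \<le> integral {0..y} (\<lambda>x. C)"
    unfolding W_def
  proof (rule abs_integral_le_integral)
    show "w s integrable_on {0..y}" by (rule integrable_continuous_interval[OF w_continuous_interval[OF s]]) simp
    show "\<bar>w s x\<bar> \<le> C" if "x \<in> {0..y}" for x
      using w_decay[OF s, of x] that constants_nonneg(1)
      by (smt (verit) atLeastAtMost_iff exp_le_one_iff mult_left_le neg_le_0_iff_le)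
  qed auto
  then show ?thesis using y by (simp add: mult.commute)
qed

lemma V_bound: assumes s: "s \<in> {0<..<T}" and y: "y \<ge> 0" shows "\<bar>V s y\<bar> \<le> C * exp (-y)"
proof -
  have I: "((\<lambda>x. C * exp (-x)) has_integral C * exp (-y)) {y..}"
    using has_integral_mult_right[OF has_integral_exp_minus_to_infinity[of 1 y], of C] by simp
  have "\<bar>V s y\<bar> \<le> integral {y..} (\<lambda>x. C * exp (-x))"
    unfolding V_def
    by (rule abs_integral_le_integral) (use w_integrable[OF s y] w_decay[OF s] y I in auto)
  also have "\<dots> = C * exp (-y)" using I by (rule integral_unique)
  finally show ?thesis .
qed

lemma W_has_derivative: assumes "s \<in> {0<..<T}" "y > 0" shows "(W s has_real_derivative w s y) (at y)"
proof -
  have "(W s has_real_derivative w s y) (at y within {0..y+1})"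
    unfolding W_def[abs_def]
    by (rule integral_has_real_derivative) (use w_continuous_interval[OF assms(1)] assms in auto)
  then show ?thesis
    by (rule has_real_derivative_at_if_within_open[where T="{0<..<y+1}"]) (use assms in auto)
qed

lemma V_has_derivative: assumes "s \<in> {0<..<T}" "y > 0" shows "(V s has_real_derivative - w s y) (at y)"
proof -
  have V_eq: "V s x = integral {0..} (w s) - W s x" if "x \<ge> 0" for x
  proof -
    have "(w s has_integral (W s x + V s x)) ({0..x} \<union> {x..})"
      unfolding W_def V_def
      by (rule has_integral_Un)
         (use integrable_continuous_interval[OF w_continuous_interval[OF assms(1)], of 0 x]
            w_integrable[OF assms(1) that] that in \<open>auto simp: integrable_integral max_absorb2\<close>)
    moreover have "{0..x} \<union> {x..} = {0::real..}" using that by auto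
    ultimately show ?thesis by (simp add: integral_unique)
  qed
  have "((\<lambda>y. integral {0..} (w s) - W s y) has_real_derivative - w s y) (at y)"
    using W_has_derivative[OF assms] by (auto intro!: derivative_eq_intros)
  then show ?thesis
    by (rule has_field_derivative_transform_within_open[where S="{0<..}"]) (use V_eq assms in auto)
qed

lemma isCont_data:
  assumes s: "s \<in> {0<..<T}" and y: "y > 0"
  shows "isCont (w s) y" "isCont (wy s) y" "isCont (W s) y" "isCont (V s) y"
    "isCont \<rho> y" "isCont \<rho>1 y" "isCont P y" "isCont (wt s) y"
proof -
  show "isCont (w s) y" using wy_deriv[OF s y] DERIV_isCont by blast
  show "isCont (wy s) y" using wyy_deriv[OF s y] DERIV_isCont by blast
  show "isCont (W s) y" using W_has_derivative[OF s y] DERIV_isCont by blast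
  show "isCont (V s) y" using V_has_derivative[OF s y] DERIV_isCont by blast
  show "isCont \<rho> y" using rho_has_derivative[OF y] DERIV_isCont by blast
  show "isCont P y" using P_has_derivative[OF y] DERIV_isCont by blast
  show "isCont \<rho>1 y" using continuous_on_interior[OF rho1_cont, of y] y by auto
  show "isCont (wt s) y"
    using continuous_on_interior[OF wt_continuous[OF s], of y] y by (simp add: interior_open)
qed

text \<open>Substituting the equation for \<open>\<partial>\<^sub>t w\<close> and integrating the terms with \<open>\<partial>\<^sub>y w\<close>
  and \<open>\<partial>\<^sub>y\<^sup>2 w\<close> by parts splits \<open>\<integral> \<rho> \<partial>\<^sub>t w\<close> into a boundary term and a bulk term
  involving only \<open>w\<close>, \<open>\<partial>\<^sub>y w\<close> and their primitives.\<close>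

definition "boundary_term s y = - \<rho> y * W s y * w s y - U s * y * \<rho> y * w s y + P y * V s y + \<rho> y * wy s y"
definition "bulk_term s y = 2 * \<rho> y * (w s y)\<^sup>2 + \<rho>1 y * W s y * w s y + U s * (3 * \<rho> y + y * \<rho>1 y) * w s y
    + P y * w s y - \<rho>1 y * wy s y"

lemma boundary_term_has_derivative:
  assumes s: "s \<in> {0<..<T}" and y: "y > 0"
  shows "(boundary_term s has_real_derivative (\<rho> y * wt s y - bulk_term s y)) (at y)"
proof -
  have wt: "wt s y = (w s y)\<^sup>2 - (W s y + U s * y) * wy s y + 2 * U s * w s y + V s y + wyy s y"
    using equation[OF s y] unfolding W_def V_def by (auto simp: algebra_simps)
  have "(boundary_term s has_real_derivative
      (- (\<rho>1 y * W s y * w s y + \<rho> y * w s y * w s y + \<rho> y * W s y * wy s y)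
       - U s * (\<rho> y * w s y + y * \<rho>1 y * w s y + y * \<rho> y * wy s y)
       + (\<rho> y * V s y + P y * (- w s y)) + (\<rho>1 y * wy s y + \<rho> y * wyy s y))) (at y)"
    unfolding boundary_term_def[abs_def]
    by (auto intro!: derivative_eq_intros W_has_derivative[OF s y] V_has_derivative[OF s y]
        P_has_derivative[OF y] rho_has_derivative[OF y] wy_deriv[OF s y] wyy_deriv[OF s y]
        simp: algebra_simps)
  then show ?thesis
    unfolding wt bulk_term_def by (simp add: algebra_simps power2_eq_square)
qed

lemma bulk_term_continuous:
  assumes s: "s \<in> {0<..<T}" and a: "a > 0"
  shows "continuous_on {a..b} (bulk_term s)" "continuous_on {a..b} (\<lambda>y. \<rho> y * wt s y)"
proof -
  have "isCont (bulk_term s) y \<and> isCont (\<lambda>y. \<rho> y * wt s y) y" if "y \<in> {a..b}" for y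
    using isCont_data[OF s, of y] that a unfolding bulk_term_def[abs_def]
    by (intro conjI continuous_intros) auto
  then show "continuous_on {a..b} (bulk_term s)" "continuous_on {a..b} (\<lambda>y. \<rho> y * wt s y)"
    by (auto intro!: continuous_at_imp_continuous_on)
qed

lemma integral_rho_wt:
  assumes s: "s \<in> {0<..<T}" and a: "0 < a" "a \<le> b"
  shows "integral {a..b} (\<lambda>y. \<rho> y * wt s y) = boundary_term s b - boundary_term s a + integral {a..b} (bulk_term s)"
proof -
  have "((\<lambda>y. \<rho> y * wt s y - bulk_term s y) has_integral (boundary_term s b - boundary_term s a)) {a..b}"
    by (rule fundamental_theorem_of_calculus[OF a(2)])
       (use boundary_term_has_derivative[OF s] a in \<open>auto simp flip: has_real_derivative_iff_has_vector_derivative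
          intro: has_field_derivative_at_within\<close>)
  moreover have "integral {a..b} (\<lambda>y. \<rho> y * wt s y - bulk_term s y)
      = integral {a..b} (\<lambda>y. \<rho> y * wt s y) - integral {a..b} (bulk_term s)"
    by (rule integral_diff) (use bulk_term_continuous[OF s a(1)] in \<open>auto intro: integrable_continuous_interval\<close>)
  ultimately show ?thesis by (simp add: integral_unique)
qed

lemma bulk_term_bound:
  obtains K1 where "K1 \<ge> 0"
    "\<And>s y. s \<in> {0<..<T} \<Longrightarrow> (y::real) > 0 \<Longrightarrow> \<bar>bulk_term s y\<bar> \<le> K1 * ((1 + y) * exp (-y))"
proof -
  note cn = constants_nonneg
  define K1 where "K1 = (2*Rb*C + R1*C + K*(3*Rb + R1) + Rb + R1) * C"
  have "\<bar>bulk_term s y\<bar> \<le> K1 * ((1 + y) * exp (-y))" if s: "s \<in> {0<..<T}" and y: "(y::real) > 0" for s y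
  proof -
    define E where "E = C * exp (-y)"
    have grow: "X \<le> X * (1 + y)" if "X \<ge> 0" for X using that y by (simp add: algebra_simps)
    have w: "\<bar>w s y\<bar> \<le> E" and wy: "\<bar>wy s y\<bar> \<le> E"
      using w_decay[OF s] wy_decay[OF s y] y unfolding E_def by auto
    have wC: "\<bar>w s y\<bar> \<le> C"
      using w cn y unfolding E_def by (smt (verit) exp_le_one_iff mult_left_le neg_le_0_iff_le)
    have r: "\<bar>\<rho> y\<bar> \<le> Rb" "\<bar>\<rho>1 y\<bar> \<le> R1" using rho_bounded rho1_bounded y by auto
    define a where "a = 2 * \<rho> y * w s y + \<rho>1 y * W s y + U s * (3 * \<rho> y + y * \<rho>1 y) + P y"
    have "\<bar>2 * \<rho> y * w s y\<bar> \<le> 2*Rb*C*(1 + y)"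
      using abs_mult_le_mult[OF r(1) wC] grow[of "Rb*C"] cn by (simp add: abs_mult)
    moreover have "\<bar>\<rho>1 y * W s y\<bar> \<le> R1*C*(1 + y)"
      using abs_mult_le_mult[OF r(2) W_bound[OF s less_imp_le[OF y]]] grow[of "R1*C"] cn by simp
    moreover have "\<bar>U s * (3 * \<rho> y + y * \<rho>1 y)\<bar> \<le> K*((3*Rb + R1)*(1 + y))"
    proof (rule abs_mult_le_mult)
      show "\<bar>U s\<bar> \<le> K" using U_bounded s by auto
      have "\<bar>y * \<rho>1 y\<bar> \<le> y * R1" using r(2) y by (simp add: abs_mult mult_left_mono)
      then show "\<bar>3 * \<rho> y + y * \<rho>1 y\<bar> \<le> (3*Rb + R1)*(1 + y)"
        using r grow[of "3*Rb"] cn by (simp add: algebra_simps)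
    qed
    moreover have "\<bar>P y\<bar> \<le> Rb*(1 + y)" using P_bounds(1)[of y] y cn by (simp add: algebra_simps)
    ultimately have a: "\<bar>a\<bar> \<le> 2*Rb*C*(1 + y) + R1*C*(1 + y) + K*((3*Rb + R1)*(1 + y)) + Rb*(1 + y)"
      unfolding a_def by (intro abs_add_le_add)
    have "\<bar>a * w s y - \<rho>1 y * wy s y\<bar>
      \<le> (2*Rb*C*(1 + y) + R1*C*(1 + y) + K*((3*Rb + R1)*(1 + y)) + Rb*(1 + y)) * E + R1 * E"
      using w wy r a by (intro abs_diff_le_add abs_mult_le_mult)
    also have "\<dots> \<le> K1 * ((1 + y) * exp (-y))"
      using grow[of "R1 * E"] cn unfolding K1_def E_def by (simp add: algebra_simps)
    finally show ?thesis
      unfolding bulk_term_def a_def by (simp add: algebra_simps power2_eq_square)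
  qed
  moreover have "K1 \<ge> 0" using cn by (simp add: K1_def)
  ultimately show ?thesis using that by blast
qed

lemma boundary_term_bound_at_top:
  obtains K2 where "K2 \<ge> 0"
    "\<And>s y. s \<in> {0<..<T} \<Longrightarrow> (y::real) > 0 \<Longrightarrow> \<bar>boundary_term s y\<bar> \<le> K2 * ((1 + y) * exp (-y))"
proof -
  note cn = constants_nonneg
  define K2 where "K2 = (Rb*C + K*Rb + Rb + Rb) * C"
  have "\<bar>boundary_term s y\<bar> \<le> K2 * ((1 + y) * exp (-y))" if s: "s \<in> {0<..<T}" and y: "(y::real) > 0" for s y
  proof -
    define E where "E = C * exp (-y)"
    have grow: "X \<le> X * (1 + y)" if "X \<ge> 0" for X using that y by (simp add: algebra_simps)
    have w: "\<bar>w s y\<bar> \<le> E" and wy: "\<bar>wy s y\<bar> \<le> E" and V: "\<bar>V s y\<bar> \<le> E"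
      using w_decay[OF s] wy_decay[OF s y] V_bound[OF s] y unfolding E_def by auto
    have r: "\<bar>\<rho> y\<bar> \<le> Rb*(1 + y)" using rho_bounded[of y] grow[of Rb] cn y by auto
    define a where "a = \<rho> y * W s y + U s * y * \<rho> y"
    have "\<bar>\<rho> y * W s y\<bar> \<le> Rb*C*(1 + y)"
      using abs_mult_le_mult[OF rho_bounded[OF less_imp_le[OF y]] W_bound[OF s less_imp_le[OF y]]]
        grow[of "Rb*C"] cn by simp
    moreover have "\<bar>U s * y * \<rho> y\<bar> \<le> K*Rb*(1 + y)"
    proof -
      have "\<bar>U s * y * \<rho> y\<bar> \<le> K * y * Rb"
        by (intro abs_mult_le_mult) (use U_bounded s y rho_bounded in auto)
      also have "\<dots> \<le> K*Rb*(1 + y)" using cn by (simp add: algebra_simps)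
      finally show ?thesis .
    qed
    ultimately have a: "\<bar>a\<bar> \<le> Rb*C*(1 + y) + K*Rb*(1 + y)"
      unfolding a_def by (rule abs_add_le_add)
    have "\<bar>P y\<bar> \<le> Rb*(1 + y)" using P_bounds(1)[of y] y cn by (simp add: algebra_simps)
    then have "\<bar>P y * V s y + \<rho> y * wy s y - a * w s y\<bar>
      \<le> Rb*(1 + y) * E + Rb*(1 + y) * E + (Rb*C*(1 + y) + K*Rb*(1 + y)) * E"
      using w wy V r a by (intro abs_diff_le_add abs_add_le_add abs_mult_le_mult)
    also have "\<dots> = K2 * ((1 + y) * exp (-y))"
      unfolding K2_def E_def by (simp add: algebra_simps)
    finally show ?thesis
      unfolding boundary_term_def a_def by (simp add: algebra_simps)
  qed
  moreover have "K2 \<ge> 0" using cn by (simp add: K2_def)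
  ultimately show ?thesis using that by blast
qed

lemma boundary_term_bound_at_0:
  obtains K3 where "K3 \<ge> 0"
    "\<And>s y. s \<in> {0<..<T} \<Longrightarrow> (y::real) > 0 \<Longrightarrow> \<bar>boundary_term s y\<bar> \<le> K3 * (\<bar>\<rho> y\<bar> + y)"
proof (rule that)
  note cn = constants_nonneg
  show "C*C + K*Rb*C + Rb*C + C \<ge> 0" using cn by simp
  fix s y :: real assume s: "s \<in> {0<..<T}" and y: "y > 0"
  have E: "C * exp (-y) \<le> C" using y cn by (simp add: mult_left_le)
  have w: "\<bar>w s y\<bar> \<le> C" using w_decay[OF s less_imp_le[OF y]] E by linarith
  have wy: "\<bar>wy s y\<bar> \<le> C" using wy_decay[OF s y] E by linarith
  have W: "\<bar>W s y\<bar> \<le> C" using W_bound[OF s] y by simp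
  have V: "\<bar>V s y\<bar> \<le> C" using V_bound[OF s less_imp_le[OF y]] E by linarith
  have U: "\<bar>U s\<bar> \<le> K" using U_bounded s by auto
  have r: "\<bar>\<rho> y\<bar> \<le> Rb" using rho_bounded y by auto
  have P: "\<bar>P y\<bar> \<le> Rb * y" using P_bounds y by auto
  have yy: "\<bar>y\<bar> \<le> y" using y by simp
  have "\<bar>\<rho> y * W s y * w s y\<bar> \<le> \<bar>\<rho> y\<bar>*C*C" by (intro abs_mult_le_mult order_refl w W)
  moreover have "\<bar>U s * y * \<rho> y * w s y\<bar> \<le> K*y*Rb*C" by (intro abs_mult_le_mult r w U yy)
  moreover have "\<bar>P y * V s y\<bar> \<le> Rb*y*C" by (intro abs_mult_le_mult P V)
  moreover have "\<bar>\<rho> y * wy s y\<bar> \<le> \<bar>\<rho> y\<bar>*C" by (intro abs_mult_le_mult order_refl wy)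
  ultimately have "\<bar>boundary_term s y\<bar> \<le> \<bar>\<rho> y\<bar>*C*C + K*y*Rb*C + Rb*y*C + \<bar>\<rho> y\<bar>*C"
    unfolding boundary_term_def by linarith
  also have "\<dots> \<le> (C*C + K*Rb*C + Rb*C + C) * (\<bar>\<rho> y\<bar> + y)"
    using cn y by (simp add: algebra_simps mult_nonneg_nonneg)
  finally show "\<bar>boundary_term s y\<bar> \<le> (C*C + K*Rb*C + Rb*C + C) * (\<bar>\<rho> y\<bar> + y)" .
qed

lemma integral_bulk_term_bounds:
  assumes K1: "\<And>s y. s \<in> {0<..<T} \<Longrightarrow> (y::real) > 0 \<Longrightarrow> \<bar>bulk_term s y\<bar> \<le> K1 * ((1 + y) * exp (-y))"
    and K1_nonneg: "K1 \<ge> 0" and s: "s \<in> {0<..<T}" and a: "0 < a" "a \<le> b"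
  shows "\<bar>integral {a..b} (bulk_term s)\<bar> \<le> K1 * (b - a)"
    "\<bar>integral {a..b} (bulk_term s)\<bar> \<le> K1 * ((2 + a) * exp (-a))"
proof -
  have int: "bulk_term s integrable_on {a..b}"
    using bulk_term_continuous(1)[OF s a(1)] by (rule integrable_continuous_interval)
  have bd: "\<bar>bulk_term s y\<bar> \<le> K1 * ((1 + y) * exp (-y))" if "y \<in> {a..b}" for y
    using K1[OF s, of y] that a by auto
  have "(1 + y) * exp (-y) \<le> 1" for y :: real
    using exp_ge_add_one_self[of y] by (simp add: exp_minus field_simps)
  then have "K1 * ((1 + y) * exp (-y)) \<le> K1" for y :: real
    using mult_left_mono[OF _ K1_nonneg] by (metis mult.right_neutral)
  then have "\<bar>integral {a..b} (bulk_term s)\<bar> \<le> integral {a..b} (\<lambda>y. K1)"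
    using bd by (intro abs_integral_le_integral[OF int]) (auto intro: order_trans)
  then show "\<bar>integral {a..b} (bulk_term s)\<bar> \<le> K1 * (b - a)" using a by (simp add: mult.commute)
  have I: "((\<lambda>y. K1 * ((1 + y) * exp (-y))) has_integral K1 * ((2 + a) * exp (-a) - (2 + b) * exp (-b))) {a..b}"
    by (rule has_integral_mult_right[OF has_integral_one_plus_x_exp_minus[OF a(2)]])
  have "\<bar>integral {a..b} (bulk_term s)\<bar> \<le> integral {a..b} (\<lambda>y. K1 * ((1 + y) * exp (-y)))"
    by (rule abs_integral_le_integral[OF int]) (use I bd in auto)
  also have "\<dots> = K1 * ((2 + a) * exp (-a) - (2 + b) * exp (-b))" using I by (rule integral_unique)
  also have "\<dots> \<le> K1 * ((2 + a) * exp (-a))" using K1_nonneg a by (intro mult_left_mono) auto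
  finally show "\<bar>integral {a..b} (bulk_term s)\<bar> \<le> K1 * ((2 + a) * exp (-a))" .
qed

section \<open>Differentiability of the weighted mass\<close>

definition "G s = integral {0..} (\<lambda>y. \<rho> y * w s y)"
definition "G_trunc n s = integral {trunc_lo n..trunc_hi n} (\<lambda>y. \<rho> y * w s y)"
definition "dG_trunc n s = integral {trunc_lo n..trunc_hi n} (\<lambda>y. \<rho> y * wt s y)"
definition "dG s = lim (\<lambda>n. dG_trunc n s)"

lemma G_trunc_has_derivative:
  assumes s: "s \<in> {0<..<T}" shows "(G_trunc n has_real_derivative dG_trunc n s) (at s)"
proof -
  let ?I = "{trunc_lo n..trunc_hi n}"
  have I_pos: "?I \<subseteq> {0<..}" using trunc_lo_hi(1)[of n] by auto
  have fx: "((\<lambda>s. \<rho> y * w s y) has_field_derivative \<rho> y * wt s y) (at s within {0<..<T})"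
    if "s \<in> {0<..<T}" "y \<in> cbox (trunc_lo n) (trunc_hi n)" for s y
  proof -
    have "y > 0" using that(2) I_pos by auto
    show ?thesis
      using DERIV_cmult[OF has_field_derivative_at_within[OF wt_deriv[OF that(1) \<open>y > 0\<close>]], of "\<rho> y"] .
  qed
  have int: "(\<lambda>y. \<rho> y * w s y) integrable_on cbox (trunc_lo n) (trunc_hi n)" if "s \<in> {0<..<T}" for s
  proof -
    have "continuous_on ?I (\<lambda>y. \<rho> y * w s y)"
      using continuous_on_subset[OF rho_continuous] w_continuous_interval[OF that] trunc_lo_hi(1)[of n]
      by (intro continuous_intros) auto
    then show ?thesis by (simp add: integrable_continuous_interval)
  qed
  have cont: "continuous_on ({0<..<T} \<times> cbox (trunc_lo n) (trunc_hi n)) (\<lambda>(s, y). \<rho> y * wt s y)"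
  proof -
    have "continuous_on ({0<..<T} \<times> ?I) (\<lambda>p. wt (fst p) (snd p))"
      by (rule continuous_on_subset[OF wt_cont]) (use I_pos in auto)
    moreover have "continuous_on ({0<..<T} \<times> ?I) (\<lambda>p. \<rho> (snd p))"
      by (rule continuous_on_compose2[OF rho_continuous continuous_on_snd]) (use I_pos in auto)
    ultimately show ?thesis by (simp add: split_beta continuous_on_mult)
  qed
  have "(G_trunc n has_real_derivative dG_trunc n s) (at s within {0<..<T})"
    using leibniz_rule_field_derivative[OF fx int cont s] unfolding G_trunc_def dG_trunc_def by simp
  then show ?thesis using at_within_open[OF s] by simp
qed

lemma G_trunc_tendsto: assumes s: "s \<in> {0<..<T}" shows "(\<lambda>n. G_trunc n s) \<longlonglongrightarrow> G s"
  unfolding G_trunc_def G_def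
proof (rule tendsto_integral_trunc[where h="\<lambda>y. Rb * C * exp (-y)"])
  show "continuous_on {0..} (\<lambda>y. \<rho> y * w s y)" using rho_continuous w_continuous[OF s] by (intro continuous_intros)
  show "(\<lambda>y. Rb * C * exp (-y)) integrable_on {0..}"
    using integrable_cmul[OF integrable_on_exp_minus_to_infinity[of 1 0], of "Rb*C"] by simp
  show "\<bar>\<rho> y * w s y\<bar> \<le> Rb * C * exp (-y)" if "y \<ge> 0" for y
    using abs_mult_le_mult[OF rho_bounded[OF that] w_decay[OF s that]] by (simp add: mult.assoc)
qed (simp add: rho_0)

lemma dG_trunc_diff:
  assumes s: "s \<in> {0<..<T}" and nm: "n \<le> m"
  shows "dG_trunc m s - dG_trunc n s
    = boundary_term s (trunc_hi m) - boundary_term s (trunc_hi n)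
      - (boundary_term s (trunc_lo m) - boundary_term s (trunc_lo n))
      + integral {trunc_lo m..trunc_lo n} (bulk_term s) + integral {trunc_hi n..trunc_hi m} (bulk_term s)"
proof -
  note tr = trunc_lo_hi[of n] trunc_lo_hi[of m] trunc_lo_hi(4,5)[OF nm]
  have dG: "dG_trunc k s = boundary_term s (trunc_hi k) - boundary_term s (trunc_lo k)
      + integral {trunc_lo k..trunc_hi k} (bulk_term s)" for k
    unfolding dG_trunc_def using integral_rho_wt[OF s] trunc_lo_hi[of k] by auto
  have int: "bulk_term s integrable_on {trunc_lo m..trunc_hi m}"
    using bulk_term_continuous(1)[OF s] tr by (intro integrable_continuous_interval) auto
  have "integral {trunc_lo m..trunc_lo n} (bulk_term s) + integral {trunc_lo n..trunc_hi m} (bulk_term s)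
      = integral {trunc_lo m..trunc_hi m} (bulk_term s)"
    by (rule Henstock_Kurzweil_Integration.integral_combine) (use tr int in auto)
  moreover have "integral {trunc_lo n..trunc_hi n} (bulk_term s) + integral {trunc_hi n..trunc_hi m} (bulk_term s)
      = integral {trunc_lo n..trunc_hi m} (bulk_term s)"
    by (rule Henstock_Kurzweil_Integration.integral_combine)
       (use tr integrable_subinterval_real[OF int, of "trunc_lo n" "trunc_hi m"] in auto)
  ultimately show ?thesis unfolding dG[of m] dG[of n] by linarith
qed

lemma dG_trunc_uniformly_Cauchy: "uniformly_Cauchy_on {0<..<T} dG_trunc"
proof -
  obtain K1 where K1: "K1 \<ge> 0" "\<And>s y. s \<in> {0<..<T} \<Longrightarrow> (y::real) > 0 \<Longrightarrow> \<bar>bulk_term s y\<bar> \<le> K1 * ((1 + y) * exp (-y))"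
    using bulk_term_bound by blast
  obtain K2 where K2: "K2 \<ge> 0" "\<And>s y. s \<in> {0<..<T} \<Longrightarrow> (y::real) > 0 \<Longrightarrow> \<bar>boundary_term s y\<bar> \<le> K2 * ((1 + y) * exp (-y))"
    using boundary_term_bound_at_top by blast
  obtain K3 where K3: "K3 \<ge> 0" "\<And>s y. s \<in> {0<..<T} \<Longrightarrow> (y::real) > 0 \<Longrightarrow> \<bar>boundary_term s y\<bar> \<le> K3 * (\<bar>\<rho> y\<bar> + y)"
    using boundary_term_bound_at_0 by blast
  define hi where "hi n = K2 * ((1 + trunc_hi n) * exp (- trunc_hi n)) + K1 * ((2 + trunc_hi n) * exp (- trunc_hi n))" for n :: nat
  define lo where "lo n = K1 * trunc_lo n + K3 * (\<bar>\<rho> (trunc_lo n)\<bar> + trunc_lo n)" for n :: nat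
  show ?thesis
  proof (rule uniformly_Cauchy_onI_tail_bound[where \<tau>="\<lambda>n. hi n + lo n"])
    have "(\<lambda>n. \<rho> (trunc_lo n)) \<longlonglongrightarrow> \<rho> 0"
      by (rule continuous_on_tendsto_compose[OF rho_continuous trunc_lo_tendsto])
         (use trunc_lo_hi(1) in \<open>auto intro!: always_eventually less_imp_le\<close>)
    then have "(\<lambda>n. hi n + lo n) \<longlonglongrightarrow> (K2 * 0 + K1 * 0) + (K1 * 0 + K3 * (\<bar>0\<bar> + 0))"
      unfolding hi_def lo_def using rho_0
      by (intro tendsto_intros tendsto_trunc_hi_exp_minus trunc_lo_tendsto) auto
    then show "(\<lambda>n. hi n + lo n) \<longlonglongrightarrow> 0" by simp
  next
    fix m n :: nat and s assume s: "s \<in> {0<..<T}" and nm: "n \<le> m"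
    note tr = trunc_lo_hi[of n] trunc_lo_hi[of m] trunc_lo_hi(4,5)[OF nm]
    have bd: "\<bar>boundary_term s (trunc_hi k)\<bar> \<le> K2 * ((1 + trunc_hi k) * exp (- trunc_hi k))"
      "\<bar>boundary_term s (trunc_lo k)\<bar> \<le> K3 * (\<bar>\<rho> (trunc_lo k)\<bar> + trunc_lo k)" for k :: nat
      using K2(2)[OF s] K3(2)[OF s] trunc_lo_hi[of k] by auto
    note bd[of n] bd[of m]
    moreover have "\<bar>integral {trunc_lo m..trunc_lo n} (bulk_term s)\<bar> \<le> K1 * trunc_lo n"
      using integral_bulk_term_bounds(1)[OF K1(2,1) s, of "trunc_lo m" "trunc_lo n"] tr K1(1)
      by (smt (verit) mult_left_mono)
    moreover have "\<bar>integral {trunc_hi n..trunc_hi m} (bulk_term s)\<bar> \<le> K1 * ((2 + trunc_hi n) * exp (- trunc_hi n))"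
      using integral_bulk_term_bounds(2)[OF K1(2,1) s, of "trunc_hi n" "trunc_hi m"] tr by simp
    moreover have "0 \<le> K1 * ((2 + trunc_hi m) * exp (- trunc_hi m))" "0 \<le> K1 * trunc_lo m"
      using K1(1) tr by auto
    ultimately show "\<bar>dG_trunc m s - dG_trunc n s\<bar> \<le> (hi n + lo n) + (hi m + lo m)"
      unfolding dG_trunc_diff[OF s nm] hi_def lo_def by (smt (verit))
  qed
qed

lemma dG_trunc_uniform_limit: "uniform_limit {0<..<T} dG_trunc dG sequentially"
proof -
  obtain l where l: "uniform_limit {0<..<T} dG_trunc l sequentially"
    using Cauchy_uniformly_convergent[OF dG_trunc_uniformly_Cauchy] unfolding uniformly_convergent_on_def by blast
  have "l s = dG s" if "s \<in> {0<..<T}" for s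
    using tendsto_uniform_limitI[OF l that] unfolding dG_def by (simp add: limI)
  then have "uniform_limit {0<..<T} dG_trunc l sequentially \<longleftrightarrow> uniform_limit {0<..<T} dG_trunc dG sequentially"
    by (intro uniform_limit_cong) auto
  with l show ?thesis by simp
qed

lemma G_has_derivative: assumes t: "t \<in> {0<..<T}" shows "(G has_real_derivative dG t) (at t)"
  by (rule has_real_derivative_uniform_limit[OF _ _ t G_trunc_has_derivative dG_trunc_uniform_limit G_trunc_tendsto])
     auto

section \<open>The lower bound\<close>

text \<open>Integrating the \<open>\<rho>'\<close>-terms of the bulk term by parts once more gives \<open>boundary_term2\<close>
  and leaves \<open>\<rho>''(w - W\<^sup>2/2)\<close>. Instead of integrating the resulting pointwise inequality,
  the lower bound is obtained by showing that \<open>excess\<close> increases in \<open>y\<close>; this only needs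
  derivatives away from \<open>A\<close> and \<open>B\<close>, where \<open>\<rho>''\<close> may jump.\<close>

definition "boundary_term2 s y = boundary_term s y + \<rho>1 y * (W s y)\<^sup>2 / 2 - \<rho>1 y * w s y"
definition "bulk_minorant \<mu> s y =
    2 * (1 - \<beta>) * (2 * \<mu> * \<rho> y * w s y - \<mu>\<^sup>2 * \<rho> y) - K * (3 + Cf) * \<rho> y * w s y"
definition "excess \<mu> s a y =
    integral {a..y} (\<lambda>y. \<rho> y * wt s y - bulk_minorant \<mu> s y) - boundary_term2 s y"

lemma bulk_minorant_continuous:
  assumes s: "s \<in> {0<..<T}" and a: "a \<ge> 0" shows "continuous_on {a..b} (bulk_minorant \<mu> s)"
  unfolding bulk_minorant_def[abs_def]
  using continuous_on_subset[OF rho_continuous, of "{a..b}"] w_continuous_interval[OF s a, of b] a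
  by (intro continuous_intros) auto

lemma excess_integrand_continuous:
  assumes s: "s \<in> {0<..<T}" and a: "a > 0"
  shows "continuous_on {a..b} (\<lambda>y. \<rho> y * wt s y - bulk_minorant \<mu> s y)"
  by (rule continuous_on_diff[OF bulk_term_continuous(2)[OF s a] bulk_minorant_continuous[OF s less_imp_le[OF a]]])

lemma excess_continuous:
  assumes s: "s \<in> {0<..<T}" and a: "a > 0" shows "continuous_on {a..b} (excess \<mu> s a)"
proof -
  have "continuous_on {a..b} (\<lambda>y. integral {a..y} (\<lambda>y. \<rho> y * wt s y - bulk_minorant \<mu> s y))"
    unfolding continuous_on_eq_continuous_within
    using integral_has_real_derivative[OF excess_integrand_continuous[OF s a]] DERIV_continuous by blast
  moreover have "continuous_on {a..b} (boundary_term2 s)"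
  proof (intro continuous_at_imp_continuous_on ballI)
    fix y assume "y \<in> {a..b}"
    then show "isCont (boundary_term2 s) y"
      using isCont_data[OF s, of y] a unfolding boundary_term2_def[abs_def] boundary_term_def
      by (intro continuous_intros) auto
  qed
  ultimately show ?thesis
    unfolding excess_def[abs_def] by (rule continuous_on_diff)
qed

lemma excess_has_derivative:
  assumes s: "s \<in> {0<..<T}" and x: "0 < a" "a < x" and r2: "(\<rho>1 has_real_derivative r2) (at x)"
  shows "(excess \<mu> s a has_real_derivative
      2 * \<rho> x * (w s x)\<^sup>2 + U s * (3 * \<rho> x + x * \<rho>1 x) * w s x + P x * w s x
      + r2 * w s x - r2 * (W s x)\<^sup>2 / 2 - bulk_minorant \<mu> s x) (at x)"
proof -
  have x0: "x > 0" using x by simp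
  have "((\<lambda>y. integral {a..y} (\<lambda>y. \<rho> y * wt s y - bulk_minorant \<mu> s y)) has_real_derivative
      \<rho> x * wt s x - bulk_minorant \<mu> s x) (at x within {a..x+1})"
    by (rule integral_has_real_derivative[OF excess_integrand_continuous[OF s x(1)]]) (use x in auto)
  then have dI: "((\<lambda>y. integral {a..y} (\<lambda>y. \<rho> y * wt s y - bulk_minorant \<mu> s y)) has_real_derivative
      \<rho> x * wt s x - bulk_minorant \<mu> s x) (at x)"
    by (rule has_real_derivative_at_if_within_open[where T="{a<..<x+1}"]) (use x in auto)
  have dB: "(boundary_term2 s has_real_derivative (\<rho> x * wt s x - bulk_term s x + r2 * (W s x)\<^sup>2 / 2
      + \<rho>1 x * W s x * w s x - r2 * w s x - \<rho>1 x * wy s x)) (at x)"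
    unfolding boundary_term2_def[abs_def]
    by (auto intro!: derivative_eq_intros boundary_term_has_derivative[OF s x0] W_has_derivative[OF s x0]
        r2 wy_deriv[OF s x0] simp: algebra_simps power2_eq_square)
  show ?thesis
    using DERIV_diff[OF dI dB] unfolding excess_def[abs_def] by (simp add: bulk_term_def algebra_simps)
qed

lemma cutoff_has_derivative:
  assumes s: "s \<in> {0<..<T}" and y: "y > M0"
  shows "((\<lambda>y. \<eta> y * g1 y * (W s y)\<^sup>2) has_real_derivative
     \<eta>1 y * g1 y * (W s y)\<^sup>2 + \<eta> y * g2 y * (W s y)\<^sup>2 + 2 * \<eta> y * g1 y * W s y * w s y) (at y)"
proof -
  have y0: "y > 0" using y A_pos A_less_M0 by linarith
  show ?thesis
    by (auto intro!: derivative_eq_intros W_has_derivative[OF s y0] g1_has_derivative[OF y] eta_deriv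
        simp: algebra_simps power2_eq_square)
qed

lemma excess_increasing_inner:
  assumes s: "s \<in> {0<..<T}" and a: "0 < a" "a < A"
  shows "excess \<mu> s a a \<le> excess \<mu> s a M0"
proof (rule increasing_if_deriv_nonneg_off_point[where f="excess \<mu> s a" and c=A])
  show "continuous_on {a..M0} (excess \<mu> s a)" by (rule excess_continuous[OF s a(1)])
  fix x assume x: "a < x" "x < M0" "x \<noteq> A"
  have x0: "0 < x" using x a by linarith
  note inner = inner_region[OF x0 x(2,3)]
  have "0 \<le> 2 * \<rho> x * (w s x)\<^sup>2 + U s * (3 * \<rho> x + x * \<rho>1 x) * w s x + P x * w s x
      + f2 x * w s x - f2 x * (W s x)\<^sup>2 / 2 - bulk_minorant \<mu> s x"
    unfolding bulk_minorant_def
    by (rule excess_rate_nonneg_inner)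
       (use rho_nonneg w_nonneg[OF s] U_bounded U_nonpos s x0 inner(2-4) Cf_pos beta_pos beta_less_1 in auto)
  then show "\<exists>d. (excess \<mu> s a has_real_derivative d) (at x) \<and> d \<ge> 0"
    using excess_has_derivative[OF s a(1) x(1) inner(1)] by blast
qed (use a A_less_M0 in auto)

lemma excess_increasing_outer:
  assumes s: "s \<in> {0<..<T}" and a: "0 < a" "a < M0" and R: "B < R"
  defines "Q \<equiv> \<lambda>y. \<eta> y * g1 y * (W s y)\<^sup>2"
  shows "excess \<mu> s a M0 + Q M0 \<le> excess \<mu> s a R + Q R"
proof (rule increasing_if_deriv_nonneg_off_point[where f="\<lambda>y. excess \<mu> s a y + Q y" and c=B])
  have "continuous_on {M0..R} (excess \<mu> s a)"
    by (rule continuous_on_subset[OF excess_continuous[OF s a(1)]]) (use a in auto)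
  moreover have "continuous_on {M0..R} \<eta>"
    using eta_deriv DERIV_isCont by (intro continuous_at_imp_continuous_on) blast
  moreover have "continuous_on {M0..R} g1"
    by (rule continuous_on_subset[OF g1_continuous]) auto
  moreover have "continuous_on {M0..R} (W s)"
    using isCont_data(3)[OF s] a by (intro continuous_at_imp_continuous_on) auto
  ultimately show "continuous_on {M0..R} (\<lambda>y. excess \<mu> s a y + Q y)"
    unfolding Q_def by (intro continuous_intros)
  fix x assume x: "M0 < x" "x < R" "x \<noteq> B"
  have ax: "a < x" using x a by linarith
  obtain r2 where r2: "(\<rho>1 has_real_derivative r2) (at x)" "x * \<rho>1 x \<le> Cf * \<rho> x"
    "r2 \<le> 2 * \<eta>1 x * g1 x + \<eta> x * g2 x" "P x + r2 \<ge> 0" "\<eta> x * (g1 x)\<^sup>2 \<le> \<beta> * \<rho> x * g2 x"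
    using outer_region[OF x(1,3)] .
  have "0 \<le> 2 * \<rho> x * (w s x)\<^sup>2 + U s * (3 * \<rho> x + x * \<rho>1 x) * w s x + P x * w s x
      + r2 * w s x - r2 * (W s x)\<^sup>2 / 2 - bulk_minorant \<mu> s x
      + (\<eta>1 x * g1 x * (W s x)\<^sup>2 + \<eta> x * g2 x * (W s x)\<^sup>2 + 2 * \<eta> x * g1 x * W s x * w s x)"
    unfolding bulk_minorant_def
    by (rule excess_rate_nonneg_outer)
       (use rho_nonneg w_nonneg[OF s] U_bounded U_nonpos g2_pos s x ax a r2(2-5) Cf_pos beta_pos beta_less_1
         eta_nonneg in auto)
  then show "\<exists>d. ((\<lambda>y. excess \<mu> s a y + Q y) has_real_derivative d) (at x) \<and> d \<ge> 0"
    using DERIV_add[OF excess_has_derivative[OF s a(1) ax r2(1)] cutoff_has_derivative[OF s x(1)]]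
    unfolding Q_def by blast
qed (use R M0_less_B in auto)

lemma integral_rho_wt_lower_bound:
  assumes s: "s \<in> {0<..<T}" and a: "0 < a" "a < A" and R: "B < R"
  shows "integral {a..R} (\<lambda>y. \<rho> y * wt s y)
    \<ge> integral {a..R} (bulk_minorant \<mu> s) + boundary_term2 s R - boundary_term2 s a"
proof -
  have aM0: "a < M0" using a A_less_M0 by linarith
  \<comment> \<open>the cut-off term vanishes at \<open>M0\<close> and equals \<open>g' W\<^sup>2 \<le> 0\<close> at \<open>R > B\<close>\<close>
  have "- boundary_term2 s a = excess \<mu> s a a" by (simp add: excess_def)
  also have "\<dots> \<le> excess \<mu> s a M0 + \<eta> M0 * g1 M0 * (W s M0)\<^sup>2"
    using excess_increasing_inner[OF s a] by (simp add: eta_M0)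
  also have "\<dots> \<le> excess \<mu> s a R + \<eta> R * g1 R * (W s R)\<^sup>2"
    by (rule excess_increasing_outer[OF s a(1) aM0 R])
  also have "\<dots> \<le> excess \<mu> s a R"
    using eta_above[of R] g1_neg[of R] R M0_less_B by (simp add: mult_nonpos_nonneg)
  also have "\<dots> = integral {a..R} (\<lambda>y. \<rho> y * wt s y) - integral {a..R} (bulk_minorant \<mu> s) - boundary_term2 s R"
    unfolding excess_def
    using integral_diff[of "\<lambda>y. \<rho> y * wt s y" "{a..R}" "bulk_minorant \<mu> s"]
      bulk_term_continuous(2)[OF s a(1)] bulk_minorant_continuous[OF s, of a R] a
    by (simp add: integrable_continuous_interval)
  finally show ?thesis by simp
qed

lemma integral_bulk_minorant:
  assumes s: "s \<in> {0<..<T}" and a: "0 \<le> a"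
  shows "integral {a..b} (bulk_minorant \<mu> s) = (4 * (1 - \<beta>) * \<mu> - K * (3 + Cf)) * integral {a..b} (\<lambda>y. \<rho> y * w s y)
     - 2 * (1 - \<beta>) * \<mu>\<^sup>2 * integral {a..b} \<rho>"
proof -
  have i1: "(\<lambda>y. \<rho> y * w s y) integrable_on {a..b}"
    using continuous_on_subset[OF rho_continuous, of "{a..b}"] w_continuous_interval[OF s a, of b] a
    by (intro integrable_continuous_interval continuous_intros) auto
  have i2: "\<rho> integrable_on {a..b}"
    using continuous_on_subset[OF rho_continuous, of "{a..b}"] a by (intro integrable_continuous_interval) auto
  have "bulk_minorant \<mu> s = (\<lambda>y. (4 * (1 - \<beta>) * \<mu> - K * (3 + Cf)) * (\<rho> y * w s y) - 2 * (1 - \<beta>) * \<mu>\<^sup>2 * \<rho> y)"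
    by (auto simp: bulk_minorant_def fun_eq_iff algebra_simps)
  then show ?thesis
    using integral_diff[OF integrable_on_cmult_left[OF i1] integrable_on_cmult_left[OF i2]] by simp
qed

lemma boundary_term2_tendsto_at_top:
  assumes t: "t \<in> {0<..<T}" shows "(\<lambda>n. boundary_term2 t (trunc_hi n)) \<longlonglongrightarrow> 0"
proof -
  obtain K2 where K2: "K2 \<ge> 0" "\<And>s y. s \<in> {0<..<T} \<Longrightarrow> (y::real) > 0 \<Longrightarrow> \<bar>boundary_term s y\<bar> \<le> K2 * ((1 + y) * exp (-y))"
    using boundary_term_bound_at_top by blast
  define bound where "bound y = K2 * ((1 + y) * exp (- y)) + \<bar>g1 y\<bar> * (C * C) / 2 + R1 * C * ((1 + y) * exp (- y))" for y
  have "(\<lambda>n. g1 (trunc_hi n)) \<longlonglongrightarrow> 0" by (rule filterlim_compose[OF g1_tendsto trunc_hi_tendsto])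
  then have "(\<lambda>n. bound (trunc_hi n)) \<longlonglongrightarrow> K2 * 0 + \<bar>0\<bar> * (C * C) / 2 + R1 * C * 0"
    unfolding bound_def by (intro tendsto_intros tendsto_trunc_hi_exp_minus) auto
  then have bound_tendsto: "(\<lambda>n. bound (trunc_hi n)) \<longlonglongrightarrow> 0" by simp
  have bound_ge: "norm (boundary_term2 t y) \<le> bound y" if y: "y > B" for y
  proof -
    have y0: "y > 0" using y A_pos A_less_M0 M0_less_B by linarith
    have "\<bar>\<rho>1 y * (W t y * W t y)\<bar> \<le> \<bar>g1 y\<bar> * (C * C)"
      using rho1_eq_g1[OF y] W_bound[OF t] y0 by (intro abs_mult_le_mult) auto
    moreover have "\<bar>\<rho>1 y * w t y\<bar> \<le> R1 * C * ((1 + y) * exp (- y))"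
    proof -
      have "\<bar>\<rho>1 y * w t y\<bar> \<le> R1 * (C * exp (- y))"
        using rho1_bounded w_decay[OF t] y0 by (intro abs_mult_le_mult) auto
      also have "\<dots> \<le> R1 * C * ((1 + y) * exp (- y))"
        using constants_nonneg y0 by (simp add: mult_left_mono mult.assoc)
      finally show ?thesis .
    qed
    ultimately show ?thesis
      using K2(2)[OF t y0] unfolding boundary_term2_def bound_def by (simp add: abs_le_iff power2_eq_square)
  qed
  have "\<forall>\<^sub>F n in sequentially. norm (boundary_term2 t (trunc_hi n)) \<le> bound (trunc_hi n)"
    using eventually_trunc_inside[OF A_pos, of B] by eventually_elim (use bound_ge in auto)
  then show ?thesis using bound_tendsto by (rule Lim_null_comparison)
qed

lemma boundary_term2_tendsto_at_0:
  assumes t: "t \<in> {0<..<T}" shows "(\<lambda>n. boundary_term2 t (trunc_lo n)) \<longlonglongrightarrow> 0 + 0 - \<rho>1 0 * w t 0"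
  unfolding boundary_term2_def
proof (intro tendsto_add tendsto_diff)
  have lo: "\<forall>\<^sub>F n in sequentially. trunc_lo n \<in> {0..}"
    using trunc_lo_hi(1) by (auto intro!: always_eventually less_imp_le)
  obtain K3 where K3: "K3 \<ge> 0" "\<And>s y. s \<in> {0<..<T} \<Longrightarrow> (y::real) > 0 \<Longrightarrow> \<bar>boundary_term s y\<bar> \<le> K3 * (\<bar>\<rho> y\<bar> + y)"
    using boundary_term_bound_at_0 by blast
  show "(\<lambda>n. boundary_term t (trunc_lo n)) \<longlonglongrightarrow> 0"
  proof (rule Lim_null_comparison)
    show "\<forall>\<^sub>F n in sequentially. norm (boundary_term t (trunc_lo n)) \<le> K3 * (\<bar>\<rho> (trunc_lo n)\<bar> + trunc_lo n)"
      using K3(2)[OF t trunc_lo_hi(1)] by simp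
    have "(\<lambda>n. K3 * (\<bar>\<rho> (trunc_lo n)\<bar> + trunc_lo n)) \<longlonglongrightarrow> K3 * (\<bar>\<rho> 0\<bar> + 0)"
      by (intro tendsto_intros trunc_lo_tendsto continuous_on_tendsto_compose[OF rho_continuous trunc_lo_tendsto _ lo])
       auto
    then show "(\<lambda>n. K3 * (\<bar>\<rho> (trunc_lo n)\<bar> + trunc_lo n)) \<longlonglongrightarrow> 0" by (simp add: rho_0)
  qed
  show "(\<lambda>n. \<rho>1 (trunc_lo n) * (W t (trunc_lo n))\<^sup>2 / 2) \<longlonglongrightarrow> 0"
  proof (rule Lim_null_comparison)
    show "\<forall>\<^sub>F n in sequentially. norm (\<rho>1 (trunc_lo n) * (W t (trunc_lo n))\<^sup>2 / 2)
        \<le> R1 * ((C * trunc_lo n) * (C * trunc_lo n)) / 2"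
    proof (rule always_eventually, rule allI)
      fix n
      have "\<bar>\<rho>1 (trunc_lo n) * (W t (trunc_lo n) * W t (trunc_lo n))\<bar> \<le> R1 * ((C * trunc_lo n) * (C * trunc_lo n))"
        using rho1_bounded W_bound_linear[OF t, of "trunc_lo n"] trunc_lo_hi(1)[of n]
        by (intro abs_mult_le_mult) auto
      then show "norm (\<rho>1 (trunc_lo n) * (W t (trunc_lo n))\<^sup>2 / 2) \<le> R1 * ((C * trunc_lo n) * (C * trunc_lo n)) / 2"
        by (simp add: power2_eq_square)
    qed
    have "(\<lambda>n. R1 * ((C * trunc_lo n) * (C * trunc_lo n)) / 2) \<longlonglongrightarrow> R1 * ((C * 0) * (C * 0)) / 2"
      by (intro tendsto_intros trunc_lo_tendsto) auto
    then show "(\<lambda>n. R1 * ((C * trunc_lo n) * (C * trunc_lo n)) / 2) \<longlonglongrightarrow> 0" by simp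
  qed
  show "(\<lambda>n. \<rho>1 (trunc_lo n) * w t (trunc_lo n)) \<longlonglongrightarrow> \<rho>1 0 * w t 0"
    by (intro tendsto_mult continuous_on_tendsto_compose[OF rho1_cont trunc_lo_tendsto _ lo]
        continuous_on_tendsto_compose[OF w_continuous[OF t] trunc_lo_tendsto _ lo]) auto
qed

lemma dG_lower_bound:
  assumes t: "t \<in> {0<..<T}"
  shows "dG t \<ge> (4 * (1 - \<beta>) * \<mu> - K * (3 + Cf)) * G t - 2 * (1 - \<beta>) * \<mu>\<^sup>2 * integral {0..} \<rho>"
proof -
  define c1 where "c1 = 4 * (1 - \<beta>) * \<mu> - K * (3 + Cf)"
  define c2 where "c2 = 2 * (1 - \<beta>) * \<mu>\<^sup>2"
  define L where "L n = c1 * G_trunc n t - c2 * integral {trunc_lo n..trunc_hi n} \<rho>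
      + boundary_term2 t (trunc_hi n) - boundary_term2 t (trunc_lo n)" for n
  have "\<forall>\<^sub>F n in sequentially. L n \<le> dG_trunc n t"
    using eventually_trunc_inside[OF A_pos, of B]
  proof eventually_elim
    case (elim n)
    have "integral {trunc_lo n..trunc_hi n} (\<lambda>y. \<rho> y * wt t y) \<ge> integral {trunc_lo n..trunc_hi n} (bulk_minorant \<mu> t)
        + boundary_term2 t (trunc_hi n) - boundary_term2 t (trunc_lo n)"
      by (rule integral_rho_wt_lower_bound[OF t trunc_lo_hi(1)]) (use elim in auto)
    then show ?case
      using integral_bulk_minorant[OF t, of "trunc_lo n" "trunc_hi n" \<mu>] trunc_lo_hi(1)[of n]
      unfolding L_def dG_trunc_def G_trunc_def c1_def c2_def by simp
  qed
  moreover have "(\<lambda>n. integral {trunc_lo n..trunc_hi n} \<rho>) \<longlonglongrightarrow> integral {0..} \<rho>"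
    by (rule tendsto_integral_trunc[where h="\<lambda>y. \<bar>\<rho> y\<bar>"])
       (use rho_continuous rho_integrable rho_0 in \<open>simp_all add: absolutely_integrable_on_def\<close>)
  then have "L \<longlonglongrightarrow> c1 * G t - c2 * integral {0..} \<rho> + 0 - (0 + 0 - \<rho>1 0 * w t 0)"
    unfolding L_def[abs_def]
    by (intro tendsto_intros G_trunc_tendsto[OF t] boundary_term2_tendsto_at_top[OF t]
        boundary_term2_tendsto_at_0[OF t])
  moreover have "(\<lambda>n. dG_trunc n t) \<longlonglongrightarrow> dG t"
    by (rule tendsto_uniform_limitI[OF dG_trunc_uniform_limit t])
  ultimately have "c1 * G t - c2 * integral {0..} \<rho> + \<rho>1 0 * w t 0 \<le> dG t"
    using tendsto_le[OF trivial_limit_sequentially] by fastforce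
  moreover have "\<rho>1 0 * w t 0 \<ge> 0" using rho1_0_nonneg w_nonneg[OF t] by simp
  ultimately show ?thesis unfolding c1_def c2_def by linarith
qed

lemma dG_riccati_lower_bound:
  assumes t: "t \<in> {0<..<T}"
  shows "dG t \<ge> 2 * (1 - \<beta>) / integral {0..} \<rho> * (G t)\<^sup>2 - K * (3 + Cf) * G t"
proof (cases "integral {0..} \<rho> = 0")
  case True
  \<comment> \<open>then the quadratic term is \<open>x / 0 = 0\<close>\<close>
  then show ?thesis using dG_lower_bound[OF t, of 0] by simp
next
  case False
  let ?N = "integral {0..} \<rho>"
  have "(4 * (1 - \<beta>) * (G t / ?N) - K * (3 + Cf)) * G t - 2 * (1 - \<beta>) * (G t / ?N)\<^sup>2 * ?N
      = 2 * (1 - \<beta>) / ?N * (G t)\<^sup>2 - K * (3 + Cf) * G t"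
    using False by (simp add: field_simps power2_eq_square)
  then show ?thesis using dG_lower_bound[OF t, of "G t / ?N"] by simp
qed

end

theorem lemma3p3:
  fixes T :: real and U :: "real \<Rightarrow> real"
    and w wt wy wyy :: "real \<Rightarrow> real \<Rightarrow> real"
    and \<rho> :: "real \<Rightarrow> real" and Cf \<beta> :: real
  assumes T_pos: "T > 0"
    and U_cont: "continuous_on {0..T} U"
    and U_nonpos: "\<forall>t\<in>{0..T}. U t \<le> 0"
    \<comment> \<open>classical solution: w in C^{1,2}(H_T), continuous up to y = 0\<close>
    and w_cont: "continuous_on ({0<..<T} \<times> {0..}) (\<lambda>p. w (fst p) (snd p))"
    and wt_deriv: "\<forall>t\<in>{0<..<T}. \<forall>y>0. ((\<lambda>s. w s y) has_real_derivative wt t y) (at t)"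
    and wy_deriv: "\<forall>t\<in>{0<..<T}. \<forall>y>0. (w t has_real_derivative wy t y) (at y)"
    and wyy_deriv: "\<forall>t\<in>{0<..<T}. \<forall>y>0. (wy t has_real_derivative wyy t y) (at y)"
    and wt_cont: "continuous_on ({0<..<T} \<times> {0<..}) (\<lambda>p. wt (fst p) (snd p))"
    and wy_cont: "continuous_on ({0<..<T} \<times> {0<..}) (\<lambda>p. wy (fst p) (snd p))"
    and wyy_cont: "continuous_on ({0<..<T} \<times> {0<..}) (\<lambda>p. wyy (fst p) (snd p))"
    and w_nonneg: "\<forall>t\<in>{0<..<T}. \<forall>y\<ge>0. w t y \<ge> 0"
    and eq: "\<forall>t\<in>{0<..<T}. \<forall>y>0.
               wt t y - (w t y)\<^sup>2
               + (integral {0..y} (w t) + U t * y) * wy t y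
               - 2 * U t * w t y
               - integral {y..} (w t)
               - wyy t y = 0"
    and bc0: "\<forall>t\<in>{0<..<T}. w t 0 = - U t"
    and bcinf: "\<forall>t\<in>{0<..<T}. (w t \<longlongrightarrow> 0) at_top"
    and decay: "\<exists>C. \<forall>t\<in>{0<..<T}. \<forall>y>0. (\<bar>w t y\<bar> + \<bar>wy t y\<bar>) * exp y \<le> C"
    and adm: "admissible_weight \<rho> Cf \<beta>"
  shows "\<forall>t\<in>{0<..<T}.
           (\<lambda>s. integral {0..} (\<lambda>y. \<rho> y * w s y)) differentiable (at t) \<and>
           deriv (\<lambda>s. integral {0..} (\<lambda>y. \<rho> y * w s y)) t
             \<ge> 2 * (1 - \<beta>) / integral {0..} (\<lambda>y. \<bar>\<rho> y\<bar>)
                 * (integral {0..} (\<lambda>y. \<rho> y * w t y))\<^sup>2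
               - (SUP s\<in>{0..T}. \<bar>U s\<bar>) * (3 + Cf) * integral {0..} (\<lambda>y. \<rho> y * w t y)"
proof
  fix t assume t: "t \<in> {0<..<T}"
  obtain \<rho>1 Rb R1 A M0 B f f1 f2 g g1 g2 \<eta> \<eta>1
    where weight: "admissible_weight_facts \<rho> \<rho>1 Cf \<beta> Rb R1 A M0 B f f1 f2 g g1 g2 \<eta> \<eta>1"
    using admissible_weight_facts_obtain[OF adm] .
  obtain C where C: "\<forall>t\<in>{0<..<T}. \<forall>y>0. (\<bar>w t y\<bar> + \<bar>wy t y\<bar>) * exp y \<le> C"
    using decay by blast
  interpret weighted_solution \<rho> \<rho>1 Cf \<beta> Rb R1 A M0 B f f1 f2 g g1 g2 \<eta> \<eta>1
      T "SUP s\<in>{0..T}. \<bar>U s\<bar>" C U w wt wy wyy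
    by (rule weighted_solution.intro[OF weight], unfold_locales)
       (use T_pos U_nonpos w_cont wt_deriv wy_deriv wyy_deriv wt_cont w_nonneg eq C
          abs_le_SUP_abs[OF U_cont] in auto)
  have "(\<lambda>s. integral {0..} (\<lambda>y. \<rho> y * w s y)) = G" by (simp add: G_def fun_eq_iff)
  moreover have "integral {0..} (\<lambda>y. \<bar>\<rho> y\<bar>) = integral {0..} \<rho>"
    by (rule integral_cong) (use rho_nonneg in auto)
  ultimately show "(\<lambda>s. integral {0..} (\<lambda>y. \<rho> y * w s y)) differentiable (at t) \<and> deriv (\<lambda>s. integral {0..} (\<lambda>y. \<rho> y * w s y)) t
      \<ge> 2 * (1 - \<beta>) / integral {0..} (\<lambda>y. \<bar>\<rho> y\<bar>) * (integral {0..} (\<lambda>y. \<rho> y * w t y))\<^sup>2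
        - (SUP s\<in>{0..T}. \<bar>U s\<bar>) * (3 + Cf) * integral {0..} (\<lambda>y. \<rho> y * w t y)"
    using G_has_derivative[OF t] dG_riccati_lower_bound[OF t] DERIV_imp_deriv[OF G_has_derivative[OF t]]
    by (auto simp: G_def real_differentiable_def)
qed

end
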